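(* Let $\mathbb{X}$ be a finite quantum set, let $n\in\mathbb{N}$ and let $\mathcal{G}_i=(\mathbb{X},A_i)$, $i=1,\dots,n$, be directed regular quantum graphs without loops on $\mathbb{X}$. Then there exists a directed quantum graph $\mathcal{G}=(\mathbb{X}',A')$ such that $\operatorname{Qut}(\mathcal{G})=\bigcap_{i=1}^n\operatorname{Qut}(\mathcal{G}_i)$.
   Context: A finite quantum set $\mathbb{X}$ is a finite-dimensional C*-algebra $C(\mathbb{X})$ with its unique tracial positive functional $\psi$ such that, for $\langle x,y\rangle=\psi(x^*y)$ on $\ell^2(\mathbb{X}):=C(\mathbb{X})$, the multiplication $m$ satisfies $mm^*=\mathrm{id}$; $\eta$ denotes the unit of $C(\mathbb{X})$. For linear maps on $\ell^2(\mathbb{X})$: $A\bullet B=m(A\otimes B)m^*$, $\bar Af=(A(f^* ))^*$. A directed quantum graph is $(\mathbb{X},A)$ with $A\bullet A=A=\bar A$; it has no loops if $A\bullet I=0$; it is $d$-regular if $A\eta=A^*\eta=d\eta$, and regular if $d$-regular for some $d$. $\operatorname{Qut}(\mathbb{X},A)$ is the compact matrix quantum group whose Hopf $*$-algebra is the universal $*$-algebra generated by the entries $u_{ij}$ of a matrix $U$ (in an orthonormal basis of $\ell^2(\mathbb{X})$) subject to $U$ unitary, $m(U\otimes U)=Um$, $U\eta=\eta$, $UA=AU$. For compact matrix quantum groups with fundamental representations of the same size (here all on $\ell^2(\mathbb{X})$), the intersection is given by the universal $*$-algebra generated by $u_{ij}$ subject to the relations of all of them. Equality of quantum automorphism groups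 is understood as isomorphism of compact quantum groups. *)

theory Defs
  imports Complex_Main
begin

section \<open>Noncommutative polynomials (free algebra) and generated *-ideals\<close>

text \<open>A noncommutative polynomial over a letter type 'l is a finitely supported
  function from words (lists of letters) to complex coefficients.\<close>

type_synonym 'l ncp = "'l list \<Rightarrow> complex"

definition ncpoly :: "'l set \<Rightarrow> 'l ncp set" where
  "ncpoly L = {p. finite {w. p w \<noteq> 0} \<and> (\<forall>w. p w \<noteq> 0 \<longrightarrow> set w \<subseteq> L)}"

definition pzero :: "'l ncp" where "pzero = (\<lambda>w. 0)"
definition pconst :: "complex \<Rightarrow> 'l ncp" where "pconst c = (\<lambda>w. if w = [] then c else 0)"
definition mono :: "'l list \<Rightarrow> 'l ncp" where "mono v = (\<lambda>w. if w = v then 1 else 0)"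
definition padd :: "'l ncp \<Rightarrow> 'l ncp \<Rightarrow> 'l ncp" where "padd p q = (\<lambda>w. p w + q w)"
definition pdiff :: "'l ncp \<Rightarrow> 'l ncp \<Rightarrow> 'l ncp" where "pdiff p q = (\<lambda>w. p w - q w)"
definition psmult :: "complex \<Rightarrow> 'l ncp \<Rightarrow> 'l ncp" where "psmult c p = (\<lambda>w. c * p w)"
definition psum :: "('a \<Rightarrow> 'l ncp) \<Rightarrow> 'a set \<Rightarrow> 'l ncp" where
  "psum f S = (\<lambda>w. \<Sum>x\<in>S. f x w)"

definition pmul :: "'l ncp \<Rightarrow> 'l ncp \<Rightarrow> 'l ncp" where
  "pmul p q = (\<lambda>w. \<Sum>k\<le>length w. p (take k w) * q (drop k w))"

text \<open>Involution: fl maps a letter to its starred letter (an involution on letters).\<close>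
definition pstar :: "('l \<Rightarrow> 'l) \<Rightarrow> 'l ncp \<Rightarrow> 'l ncp" where
  "pstar fl p = (\<lambda>w. cnj (p (map fl (rev w))))"

definition wimg :: "('l \<Rightarrow> 'm ncp) \<Rightarrow> 'l list \<Rightarrow> 'm ncp" where
  "wimg g w = foldr (\<lambda>x acc. pmul (g x) acc) w (pconst 1)"

definition subst :: "('l \<Rightarrow> 'm ncp) \<Rightarrow> 'l ncp \<Rightarrow> 'm ncp" where
  "subst g p = (\<lambda>v. \<Sum>w\<in>{w. p w \<noteq> 0}. p w * wimg g w v)"

inductive_set gideal :: "'l set \<Rightarrow> 'l ncp set \<Rightarrow> 'l ncp set" for L R where
  zero: "pzero \<in> gideal L R"
| gen: "r \<in> R \<Longrightarrow> set w1 \<subseteq> L \<Longrightarrow> set w2 \<subseteq> L \<Longrightarrow> pmul (mono w1) (pmul r (mono w2)) \<in> gideal L R"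
| add: "a \<in> gideal L R \<Longrightarrow> b \<in> gideal L R \<Longrightarrow> padd a b \<in> gideal L R"
| smult: "a \<in> gideal L R \<Longrightarrow> psmult c a \<in> gideal L R"

text \<open>*-ideal generated by R (the universal *-algebra is the free *-algebra modulo it).\<close>
definition starideal :: "('l \<Rightarrow> 'l) \<Rightarrow> 'l set \<Rightarrow> 'l ncp set \<Rightarrow> 'l ncp set" where
  "starideal fl L R = gideal L (R \<union> pstar fl ` R)"

section \<open>Finite quantum sets in coordinates\<close>

text \<open>A finite quantum set is given by its block sizes: C(X) = M_{n_1} (+) ... (+) M_{n_k},
  whose unique tracial functional with m m^* = id is psi = (+)_b n_b Tr.
  Orthonormal basis of l^2(X): e_(b,r,s) = n_b^(-1/2) E_rs in block b.\<close>

type_synonym idx = "nat \<times> nat \<times> nat"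

definition qset :: "nat list \<Rightarrow> bool" where
  "qset ns \<longleftrightarrow> ns \<noteq> [] \<and> (\<forall>b<length ns. 0 < ns ! b)"

definition qbasis :: "nat list \<Rightarrow> idx set" where
  "qbasis ns = {(b, r, s). b < length ns \<and> r < ns ! b \<and> s < ns ! b}"

text \<open>Structure constants of m: coefficient of e_c in e_k e_l.\<close>
definition mc :: "nat list \<Rightarrow> idx \<Rightarrow> idx \<Rightarrow> idx \<Rightarrow> complex" where
  "mc ns c k l = (case c of (b, r, s) \<Rightarrow> case k of (b1, r1, s1) \<Rightarrow> case l of (b2, r2, s2) \<Rightarrow>
     if b1 = b \<and> b2 = b \<and> r1 = r \<and> s1 = r2 \<and> s2 = s then complex_of_real (1 / sqrt (real (ns ! b))) else 0)"

text \<open>The unit eta of C(X) in the orthonormal basis.\<close>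
definition eta :: "nat list \<Rightarrow> idx \<Rightarrow> complex" where
  "eta ns c = (case c of (b, r, s) \<Rightarrow> if r = s then complex_of_real (sqrt (real (ns ! b))) else 0)"

text \<open>Transpose of basis index: e_(b,r,s)^* = e_(b,s,r).\<close>
definition itr :: "idx \<Rightarrow> idx" where "itr c = (case c of (b, r, s) \<Rightarrow> (b, s, r))"

text \<open>Linear maps on l^2(X) are given by matrices in the basis (A c d = <e_c, A e_d>).\<close>
type_synonym lmap = "idx \<Rightarrow> idx \<Rightarrow> complex"

definition idm :: lmap where "idm c d = (if c = d then 1 else 0)"

text \<open>A \<bullet> B = m (A \<otimes> B) m^*.\<close>
definition schur :: "nat list \<Rightarrow> lmap \<Rightarrow> lmap \<Rightarrow> lmap" where
  "schur ns A B c d = (\<Sum>k\<in>qbasis ns. \<Sum>l\<in>qbasis ns. \<Sum>k'\<in>qbasis ns. \<Sum>l'\<in>qbasis ns.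
      mc ns c k l * A k k' * B l l' * cnj (mc ns d k' l'))"

text \<open>bar A f = (A (f^*))^*.\<close>
definition barm :: "lmap \<Rightarrow> lmap" where
  "barm A c d = cnj (A (itr c) (itr d))"

definition qgraph :: "nat list \<Rightarrow> lmap \<Rightarrow> bool" where
  "qgraph ns A \<longleftrightarrow> (\<forall>c\<in>qbasis ns. \<forall>d\<in>qbasis ns.
      schur ns A A c d = A c d \<and> barm A c d = A c d)"

definition noloops :: "nat list \<Rightarrow> lmap \<Rightarrow> bool" where
  "noloops ns A \<longleftrightarrow> (\<forall>c\<in>qbasis ns. \<forall>d\<in>qbasis ns. schur ns A idm c d = 0)"

definition dregular :: "nat list \<Rightarrow> lmap \<Rightarrow> real \<Rightarrow> bool" where
  "dregular ns A d \<longleftrightarrow> (\<forall>c\<in>qbasis ns.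
      (\<Sum>e\<in>qbasis ns. A c e * eta ns e) = complex_of_real d * eta ns c \<and>
      (\<Sum>e\<in>qbasis ns. cnj (A e c) * eta ns e) = complex_of_real d * eta ns c)"

definition regular :: "nat list \<Rightarrow> lmap \<Rightarrow> bool" where
  "regular ns A \<longleftrightarrow> (\<exists>d. dregular ns A d)"

section \<open>Quantum automorphism groups as universal Hopf *-algebras\<close>

text \<open>Letters: (i, j, False) is u_ij, (i, j, True) is u_ij^*.\<close>
type_synonym letter = "idx \<times> idx \<times> bool"

definition flipL :: "letter \<Rightarrow> letter" where "flipL x = (case x of (i, j, b) \<Rightarrow> (i, j, \<not> b))"

definition lett :: "idx set \<Rightarrow> letter set" where
  "lett B = {(i, j, b). i \<in> B \<and> j \<in> B}"

definition ug :: "idx \<Rightarrow> idx \<Rightarrow> letter ncp" where "ug i j = mono [(i, j, False)]"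
definition ugs :: "idx \<Rightarrow> idx \<Rightarrow> letter ncp" where "ugs i j = mono [(i, j, True)]"

definition delta :: "'a \<Rightarrow> 'a \<Rightarrow> complex" where "delta i j = (if i = j then 1 else 0)"

text \<open>Relations: U unitary, m(U \<otimes> U) = U m, U eta = eta.\<close>
definition rel_qset :: "nat list \<Rightarrow> letter ncp set" where
  "rel_qset ns =
     {pdiff (psum (\<lambda>k. pmul (ug i k) (ugs j k)) (qbasis ns)) (pconst (delta i j)) | i j.
        i \<in> qbasis ns \<and> j \<in> qbasis ns}
   \<union> {pdiff (psum (\<lambda>k. pmul (ugs k i) (ug k j)) (qbasis ns)) (pconst (delta i j)) | i j.
        i \<in> qbasis ns \<and> j \<in> qbasis ns}
   \<union> {pdiff (psum (\<lambda>a. psum (\<lambda>b. psmult (mc ns c a b) (pmul (ug a k) (ug b l))) (qbasis ns)) (qbasis ns))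
            (psum (\<lambda>d. psmult (mc ns d k l) (ug c d)) (qbasis ns)) | c k l.
        c \<in> qbasis ns \<and> k \<in> qbasis ns \<and> l \<in> qbasis ns}
   \<union> {pdiff (psum (\<lambda>j. psmult (eta ns j) (ug i j)) (qbasis ns)) (pconst (eta ns i)) | i.
        i \<in> qbasis ns}"

text \<open>Relation UA = AU.\<close>
definition rel_graph :: "nat list \<Rightarrow> lmap \<Rightarrow> letter ncp set" where
  "rel_graph ns A =
     {pdiff (psum (\<lambda>k. psmult (A k j) (ug i k)) (qbasis ns)) (psum (\<lambda>k. psmult (A i k) (ug k j)) (qbasis ns)) | i j.
        i \<in> qbasis ns \<and> j \<in> qbasis ns}"

text \<open>Relations of the intersection of Qut(X, A) for A in a set As (the relations of all of them).\<close>
definition qut_rel :: "nat list \<Rightarrow> lmap set \<Rightarrow> letter ncp set" where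
  "qut_rel ns As = rel_qset ns \<union> (\<Union>A\<in>As. rel_graph ns A)"

text \<open>Algebraic tensor product A \<otimes> A: free *-algebra on two copies of the letters, modulo the
  relations on each copy and commutation of letters from different copies.\<close>
definition cp :: "bool \<Rightarrow> 'l ncp \<Rightarrow> ('l \<times> bool) ncp" where
  "cp c p = (\<lambda>w. if (\<forall>x\<in>set w. snd x = c) then p (map fst w) else 0)"

definition flipT :: "letter \<times> bool \<Rightarrow> letter \<times> bool" where
  "flipT x = (flipL (fst x), snd x)"

definition tideal :: "idx set \<Rightarrow> letter ncp set \<Rightarrow> (letter \<times> bool) ncp set" where
  "tideal B R = starideal flipT (lett B \<times> UNIV)
     (cp False ` R \<union> cp True ` R \<union>
      {pdiff (pmul (mono [(x, False)]) (mono [(y, True)])) (pmul (mono [(y, True)]) (mono [(x, False)])) | x y.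
         x \<in> lett B \<and> y \<in> lett B})"

definition comult :: "idx set \<Rightarrow> idx \<Rightarrow> idx \<Rightarrow> (letter \<times> bool) ncp" where
  "comult B i j = psum (\<lambda>k. pmul (cp False (ug i k)) (cp True (ug k j))) B"

definition dimg :: "idx set \<Rightarrow> letter \<Rightarrow> (letter \<times> bool) ncp" where
  "dimg B x = (case x of (i, j, b) \<Rightarrow> if b then pstar flipT (comult B i j) else comult B i j)"

definition simg :: "(idx \<times> idx \<Rightarrow> letter ncp) \<Rightarrow> letter \<Rightarrow> letter ncp" where
  "simg q x = (case x of (i, j, b) \<Rightarrow> if b then pstar flipL (q (i, j)) else q (i, j))"

definition timg :: "(idx \<times> idx \<Rightarrow> letter ncp) \<Rightarrow> letter \<times> bool \<Rightarrow> (letter \<times> bool) ncp" where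
  "timg q x = cp (snd x) (simg q (fst x))"

text \<open>Isomorphism of the compact quantum groups with Hopf *-algebras
  Pol = free *-algebra on u_ij (i,j in B) modulo the *-ideal generated by R, resp. on B' and S:
  a *-algebra isomorphism (given by generator images q and inverse q') intertwining the
  comultiplications.\<close>
definition qgiso :: "idx set \<Rightarrow> letter ncp set \<Rightarrow> idx set \<Rightarrow> letter ncp set \<Rightarrow> bool" where
  "qgiso B R B' S \<longleftrightarrow> (\<exists>q q'.
     (\<forall>i\<in>B. \<forall>j\<in>B. q (i, j) \<in> ncpoly (lett B')) \<and>
     (\<forall>i\<in>B'. \<forall>j\<in>B'. q' (i, j) \<in> ncpoly (lett B)) \<and>
     (\<forall>r\<in>R. subst (simg q) r \<in> starideal flipL (lett B') S) \<and>
     (\<forall>s\<in>S. subst (simg q') s \<in> starideal flipL (lett B) R) \<and>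
     (\<forall>i\<in>B. \<forall>j\<in>B. pdiff (subst (simg q') (q (i, j))) (ug i j) \<in> starideal flipL (lett B) R) \<and>
     (\<forall>i\<in>B'. \<forall>j\<in>B'. pdiff (subst (simg q) (q' (i, j))) (ug i j) \<in> starideal flipL (lett B') S) \<and>
     (\<forall>i\<in>B. \<forall>j\<in>B. pdiff (subst (timg q) (comult B i j)) (subst (dimg B') (q (i, j)))
                       \<in> tideal B' S))"

end

theory Submission
  imports Defs
begin

text \<open>Let \<open>X'\<close> be the disjoint union of \<open>n + 1\<close> copies of \<open>X\<close>, the levels \<open>0, \<dots>, n\<close>, and let
  \<open>A'\<close> act on level \<open>a \<ge> 1\<close> by \<open>A\<^sub>a\<close>, join level \<open>a\<close> to level \<open>a - 1\<close> by the identity, and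
  vanish on level 0. In \<open>Pol(Qut(X', A'))\<close> the vectors \<open>f\<close> with \<open>U f = f\<close> contain \<open>\<eta>\<close> and are
  closed under \<open>A'\<close> and under the multiplication of \<open>C(X')\<close>. By regularity, \<open>A' \<eta>\<close> equals
  \<open>(d\<^sub>a + 1) \<eta>\<close> on level \<open>a \<ge> 1\<close> and vanishes on level 0; since \<open>d\<^sub>a \<ge> 0\<close> (because
  \<open>\<langle>\<eta>, A\<^sub>a \<eta>\<rangle> = \<Sum> |(A\<^sub>a)\<^sub>k\<^sub>l|\<^sup>2\<close>), polynomials in \<open>A' \<eta>\<close>, followed by repeated application
  of \<open>A'\<close>, give the restriction of \<open>\<eta>\<close> to every level as an invariant vector.
  Invariance of these vectors forces \<open>u\<^sub>i\<^sub>j = 0\<close> for \<open>i, j\<close> on different levels; the identity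
  links then identify the blocks of \<open>U\<close> on all levels, and the diagonal blocks of \<open>U A' = A' U\<close>
  give \<open>U A\<^sub>a = A\<^sub>a U\<close>. So \<open>U\<close> collapses to a single copy on \<open>X\<close> satisfying exactly the relations
  of \<open>\<Inter>\<^sub>a Qut(X, A\<^sub>a)\<close>, compatibly with the comultiplications.\<close>

section \<open>The free algebra\<close>

lemma ncp_app:
  "padd p q w = p w + q w" "pdiff p q w = p w - q w" "psmult c p w = c * p w"
  "psum f S w = (\<Sum>x\<in>S. f x w)" "pzero w = 0"
  by (simp_all add: padd_def pdiff_def psmult_def psum_def pzero_def)

lemma pmul_mono_left:
  "pmul (mono v) p w = (if \<exists>u. w = v @ u then p (drop (length v) w) else 0)"
proof -
  have "pmul (mono v) p w = (\<Sum>k\<le>length w. if k = length v then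
      (if take k w = v then p (drop k w) else 0) else 0)"
    unfolding pmul_def mono_def by (intro sum.cong refl) auto
  also have "\<dots> = (if length v \<le> length w \<and> take (length v) w = v then p (drop (length v) w) else 0)"
    by (subst sum.delta) auto
  also have "\<dots> = (if \<exists>u. w = v @ u then p (drop (length v) w) else 0)"
    by (metis append_eq_conv_conj append_take_drop_id length_take min.absorb_iff2 nat_le_linear take_all)
  finally show ?thesis .
qed

lemma suffix_iff_drop:
  "(length v \<le> length w \<and> drop (length w - length v) w = v) \<longleftrightarrow> (\<exists>u. w = u @ v)"
proof
  assume "length v \<le> length w \<and> drop (length w - length v) w = v"
  then show "\<exists>u. w = u @ v" by (metis append_take_drop_id)
qed auto

lemma pmul_mono_right:
  "pmul p (mono v) w = (if \<exists>u. w = u @ v then p (take (length w - length v) w) else 0)"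
proof -
  have "pmul p (mono v) w = (\<Sum>k\<le>length w. if k = length w - length v then
      (if length v \<le> length w \<and> drop k w = v then p (take k w) else 0) else 0)"
    unfolding pmul_def mono_def by (intro sum.cong refl) auto
  also have "\<dots> = (if length v \<le> length w \<and> drop (length w - length v) w = v
      then p (take (length w - length v) w) else 0)"
    by (subst sum.delta) auto
  finally show ?thesis by (simp only: suffix_iff_drop)
qed

lemma pmul_mono_mono: "pmul (mono v) (mono w) = mono (v @ w)"
  by (rule ext) (simp add: pmul_mono_left, auto simp: mono_def)

lemma pmul_mono_Nil_left [simp]: "pmul (mono []) p = p"
  by (rule ext) (simp add: pmul_mono_left)
lemma pmul_mono_Nil_right [simp]: "pmul p (mono []) = p"
  by (rule ext) (simp add: pmul_mono_right)

lemma pmul_mono_assoc_left: "pmul (mono v) (pmul (mono w) p) = pmul (mono (v @ w)) p"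
  by (rule ext) (auto simp: pmul_mono_left)

lemma pmul_mono_assoc_right: "pmul (pmul p (mono v)) (mono w) = pmul p (mono (v @ w))"
  by (rule ext) (auto simp: pmul_mono_right)

lemma pmul_mono_assoc_mid: "pmul (pmul (mono v) p) (mono w) = pmul (mono v) (pmul p (mono w))"
proof (rule ext)
  fix x
  show "pmul (pmul (mono v) p) (mono w) x = pmul (mono v) (pmul p (mono w)) x"
  proof (cases "\<exists>y. x = v @ y @ w")
    case True
    then obtain y where "x = v @ y @ w" by blast
    then show ?thesis by (simp add: pmul_mono_left pmul_mono_right)
  next
    case False
    have "pmul (pmul (mono v) p) (mono w) x = 0"
    proof (cases "\<exists>u. x = u @ w")
      case True
      then obtain u where u: "x = u @ w" by blast
      then have "\<not> (\<exists>y. u = v @ y)" using False by auto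
      then show ?thesis by (simp add: pmul_mono_left pmul_mono_right u)
    qed (simp add: pmul_mono_right)
    moreover have "pmul (mono v) (pmul p (mono w)) x = 0"
    proof (cases "\<exists>u. x = v @ u")
      case True
      then obtain u where u: "x = v @ u" by blast
      then have "\<not> (\<exists>y. u = y @ w)" using False by auto
      then show ?thesis by (simp add: pmul_mono_left pmul_mono_right u)
    qed (simp add: pmul_mono_left)
    ultimately show ?thesis by simp
  qed
qed

lemma pmul_padd_left: "pmul (padd p q) r = padd (pmul p r) (pmul q r)"
  by (rule ext) (simp add: ncp_app pmul_def distrib_right sum.distrib)
lemma pmul_padd_right: "pmul r (padd p q) = padd (pmul r p) (pmul r q)"
  by (rule ext) (simp add: ncp_app pmul_def distrib_left sum.distrib)
lemma pmul_psmult_left: "pmul (psmult c p) r = psmult c (pmul p r)"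
  by (rule ext) (simp add: ncp_app pmul_def sum_distrib_left mult.assoc)
lemma pmul_psmult_right: "pmul r (psmult c p) = psmult c (pmul r p)"
  by (rule ext) (simp add: ncp_app pmul_def sum_distrib_left mult.left_commute)
lemma pmul_pdiff_left: "pmul (pdiff p q) r = pdiff (pmul p r) (pmul q r)"
  by (rule ext) (simp add: ncp_app pmul_def left_diff_distrib sum_subtractf)
lemma pmul_pzero_left [simp]: "pmul pzero r = pzero"
  by (rule ext) (simp add: ncp_app pmul_def)
lemma pmul_pzero_right [simp]: "pmul r pzero = pzero"
  by (rule ext) (simp add: ncp_app pmul_def)
lemma pmul_psum_left: "pmul (psum f S) r = psum (\<lambda>x. pmul (f x) r) S"
  by (rule ext) (simp add: ncp_app pmul_def sum_distrib_right, rule sum.swap)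
lemma pmul_psum_right: "pmul r (psum f S) = psum (\<lambda>x. pmul r (f x)) S"
  by (rule ext) (simp add: ncp_app pmul_def sum_distrib_left, rule sum.swap)

lemma pconst_eq_psmult_mono: "pconst c = psmult c (mono [])"
  by (rule ext) (simp add: pconst_def mono_def ncp_app)
lemma pmul_pconst_left: "pmul (pconst c) r = psmult c r"
  by (simp add: pconst_eq_psmult_mono pmul_psmult_left)
lemma pmul_pconst_right: "pmul r (pconst c) = psmult c r"
  by (simp add: pconst_eq_psmult_mono pmul_psmult_right)

lemma pconst_0: "pconst 0 = pzero"
  by (rule ext) (simp add: pconst_def ncp_app)
lemma pdiff_self [simp]: "pdiff p p = pzero"
  by (rule ext) (simp add: ncp_app)
lemma psmult_0 [simp]: "psmult 0 p = pzero"
  by (rule ext) (simp add: ncp_app)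
lemma psmult_1 [simp]: "psmult 1 p = p"
  by (rule ext) (simp add: ncp_app)
lemma psmult_pzero [simp]: "psmult c pzero = pzero"
  by (rule ext) (simp add: ncp_app)
lemma psum_pzero [simp]: "psum (\<lambda>_. pzero) S = pzero"
  by (rule ext) (simp add: ncp_app)
lemma psum_cong: "(\<And>x. x \<in> S \<Longrightarrow> f x = g x) \<Longrightarrow> psum f S = psum g S"
  by (rule ext) (simp add: ncp_app)

lemma ug_eq_mono: "ug i j = mono [(i, j, False)]"
  by (simp add: ug_def)
lemma ugs_eq_mono: "ugs i j = mono [(i, j, True)]"
  by (simp add: ugs_def)

definition supp :: "'l ncp \<Rightarrow> 'l list set" where
  "supp p = {w. p w \<noteq> 0}"

lemma ncpoly_iff: "p \<in> ncpoly L \<longleftrightarrow> finite (supp p) \<and>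
    (\<forall>w\<in>supp p. set w \<subseteq> L)"
  by (auto simp: ncpoly_def supp_def)

lemma psum_monomials: "finite (supp p) \<Longrightarrow> psum (\<lambda>w. psmult (p w) (mono w)) (supp p) = p"
proof (rule ext)
  fix x assume "finite (supp p)"
  then have "(\<Sum>w\<in>supp p. if x = w then p w else 0) = p x" by (simp add: supp_def)
  moreover have "psum (\<lambda>w. psmult (p w) (mono w)) (supp p) x = (\<Sum>w\<in>supp p. if x = w then p w else 0)"
    by (simp add: ncp_app mono_def) (rule sum.cong, auto)
  ultimately show "psum (\<lambda>w. psmult (p w) (mono w)) (supp p) x = p x" by simp
qed

lemma ncpoly_mono: "set w \<subseteq> L \<Longrightarrow> mono w \<in> ncpoly L"
  by (auto simp: ncpoly_iff supp_def mono_def)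

lemma ncpoly_pzero: "pzero \<in> ncpoly L"
  by (auto simp: ncpoly_iff supp_def ncp_app)

lemma ncpoly_padd: "p \<in> ncpoly L \<Longrightarrow> q \<in> ncpoly L \<Longrightarrow> padd p q \<in> ncpoly L"
proof -
  assume "p \<in> ncpoly L" "q \<in> ncpoly L"
  moreover have "supp (padd p q) \<subseteq> supp p \<union> supp q" by (auto simp: supp_def ncp_app)
  ultimately show ?thesis unfolding ncpoly_iff by (meson finite_UnI finite_subset Un_iff subsetD)
qed

lemma ncpoly_psmult: "p \<in> ncpoly L \<Longrightarrow> psmult c p \<in> ncpoly L"
proof -
  assume "p \<in> ncpoly L"
  moreover have "supp (psmult c p) \<subseteq> supp p" by (auto simp: supp_def ncp_app)
  ultimately show ?thesis unfolding ncpoly_iff by (meson finite_subset subsetD)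
qed

lemma ncpoly_psum: "finite S \<Longrightarrow> (\<And>x. x \<in> S \<Longrightarrow> f x \<in> ncpoly L)
    \<Longrightarrow> psum f S \<in> ncpoly L"
proof (induction S rule: finite_induct)
  case empty
  have "psum f {} = pzero" by (rule ext) (simp add: ncp_app)
  then show ?case by (simp add: ncpoly_pzero)
next
  case (insert x F)
  have "psum f (insert x F) = padd (f x) (psum f F)" using insert by (intro ext) (simp add: ncp_app)
  then show ?case using insert by (simp add: ncpoly_padd)
qed

lemma lett_iff: "(i, j, b) \<in> lett S \<longleftrightarrow> i \<in> S \<and> j \<in> S"
  by (simp add: lett_def)

lemma ug_ncpoly: "i \<in> S \<Longrightarrow> j \<in> S \<Longrightarrow> ug i j \<in> ncpoly (lett S)"
  by (simp add: ug_eq_mono ncpoly_mono lett_iff)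
lemma ugs_ncpoly: "i \<in> S \<Longrightarrow> j \<in> S \<Longrightarrow> ugs i j \<in> ncpoly (lett S)"
  by (simp add: ugs_eq_mono ncpoly_mono lett_iff)

lemma supp_psum: "supp (psum f S) \<subseteq> (\<Union>x\<in>S. supp (f x))"
proof
  fix w assume "w \<in> supp (psum f S)"
  then have "(\<Sum>x\<in>S. f x w) \<noteq> 0" by (simp add: supp_def ncp_app)
  then obtain x where "x \<in> S" "f x w \<noteq> 0" using sum.neutral[of S "\<lambda>x. f x w"] by blast
  then show "w \<in> (\<Union>x\<in>S. supp (f x))" by (auto simp: supp_def)
qed

lemma finite_supp_psum [simp]:
  "finite S \<Longrightarrow> (\<And>x. x \<in> S \<Longrightarrow> finite (supp (f x))) \<Longrightarrow>
      finite (supp (psum f S))"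
  by (rule finite_subset[OF supp_psum]) auto

lemma finite_supp_mono [simp]: "finite (supp (mono w))"
proof -
  have "supp (mono w) = {w}" by (auto simp: supp_def mono_def)
  then show ?thesis by simp
qed

lemma finite_supp_pzero [simp]: "finite (supp pzero)"
  by (simp add: supp_def ncp_app)
lemma finite_supp_pconst [simp]: "finite (supp (pconst c))"
  by (rule finite_subset[of _ "{[]}"]) (auto simp: supp_def pconst_def)
lemma finite_supp_padd [simp]: "finite (supp p) \<Longrightarrow> finite (supp q) \<Longrightarrow> finite
    (supp (padd p q))"
  by (rule finite_subset[of _ "supp p \<union> supp q"]) (auto simp: supp_def ncp_app)
lemma finite_supp_pdiff [simp]: "finite (supp p) \<Longrightarrow> finite (supp q) \<Longrightarrow> finite
    (supp (pdiff p q))"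
  by (rule finite_subset[of _ "supp p \<union> supp q"]) (auto simp: supp_def ncp_app)
lemma finite_supp_psmult [simp]: "finite (supp p) \<Longrightarrow> finite (supp (psmult c p))"
  by (rule finite_subset[of _ "supp p"]) (auto simp: supp_def ncp_app)

lemma finite_supp_pmul [simp]:
  assumes "finite (supp p)" "finite (supp q)"
  shows "finite (supp (pmul p q))"
proof (rule finite_subset)
  show "supp (pmul p q) \<subseteq> (\<lambda>(u, v). u @ v) ` (supp p \<times> supp q)"
  proof
    fix w assume "w \<in> supp (pmul p q)"
    then have "(\<Sum>k\<le>length w. p (take k w) * q (drop k w)) \<noteq> 0" by (simp add: supp_def pmul_def)
    then obtain k where "p (take k w) * q (drop k w) \<noteq> 0"
      using sum.neutral[of "{..length w}" "\<lambda>k. p (take k w) * q (drop k w)"] by blast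
    then show "w \<in> (\<lambda>(u, v). u @ v) ` (supp p \<times> supp q)"
      by (intro image_eqI[of _ _ "(take k w, drop k w)"]) (auto simp: supp_def)
  qed
qed (use assms in simp)

section \<open>Two-sided ideals and congruence modulo an ideal\<close>

lemma gideal_generator: "r \<in> R \<Longrightarrow> r \<in> gideal L R"
  using gideal.gen[of r R "[]" L "[]"] by simp

lemma starideal_generator: "r \<in> R \<Longrightarrow> r \<in> starideal fl L R"
  unfolding starideal_def by (rule gideal_generator) simp

lemma starideal_pzero: "pzero \<in> starideal fl L R"
  unfolding starideal_def by (rule gideal.zero)

lemma gideal_pdiff: "a \<in> gideal L R \<Longrightarrow> b \<in> gideal L R \<Longrightarrow> pdiff a b \<in>
    gideal L R"
proof -
  assume "a \<in> gideal L R" "b \<in> gideal L R"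
  moreover have "pdiff a b = padd a (psmult (-1) b)" by (rule ext) (simp add: ncp_app)
  ultimately show ?thesis by (simp add: gideal.add gideal.smult)
qed

lemma gideal_psum: "finite S \<Longrightarrow> (\<And>x. x \<in> S \<Longrightarrow> f x \<in> gideal L R)
    \<Longrightarrow> psum f S \<in> gideal L R"
proof (induction S rule: finite_induct)
  case empty
  have "psum f {} = pzero" by (rule ext) (simp add: ncp_app)
  then show ?case by (simp add: gideal.zero)
next
  case (insert x F)
  have "psum f (insert x F) = padd (f x) (psum f F)" using insert by (intro ext) (simp add: ncp_app)
  then show ?case using insert by (simp add: gideal.add)
qed

lemma gideal_mono_left: "a \<in> gideal L R \<Longrightarrow> set v \<subseteq> L \<Longrightarrow> pmul
    (mono v) a \<in> gideal L R"
proof (induction a rule: gideal.induct)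
  case zero then show ?case by (simp add: gideal.zero)
next
  case (gen r w1 w2)
  then show ?case using gideal.gen[of r R "v @ w1" L w2] by (simp add: pmul_mono_assoc_left)
next
  case (add a b) then show ?case by (simp add: pmul_padd_right gideal.add)
next
  case (smult a c) then show ?case by (simp add: pmul_psmult_right gideal.smult)
qed

lemma gideal_mono_right: "a \<in> gideal L R \<Longrightarrow> set v \<subseteq> L \<Longrightarrow> pmul a
    (mono v) \<in> gideal L R"
proof (induction a rule: gideal.induct)
  case zero then show ?case by (simp add: gideal.zero)
next
  case (gen r w1 w2)
  then show ?case using gideal.gen[of r R w1 L "w2 @ v"]
    by (simp add: pmul_mono_assoc_mid pmul_mono_assoc_right)
next
  case (add a b) then show ?case by (simp add: pmul_padd_left gideal.add)
next
  case (smult a c) then show ?case by (simp add: pmul_psmult_left gideal.smult)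
qed

lemma gideal_pmul_left:
  assumes a: "a \<in> gideal L R" and p: "p \<in> ncpoly L"
  shows "pmul p a \<in> gideal L R"
proof -
  from p have f: "finite (supp p)" and s: "\<forall>w\<in>supp p. set w \<subseteq> L" by (auto simp: ncpoly_iff)
  have "pmul p a = psum (\<lambda>w. psmult (p w) (pmul (mono w) a)) (supp p)"
    by (subst psum_monomials[OF f, symmetric]) (simp add: pmul_psum_left pmul_psmult_left)
  also have "\<dots> \<in> gideal L R"
    using f s a by (intro gideal_psum gideal.smult gideal_mono_left) auto
  finally show ?thesis .
qed

lemma gideal_pmul_right:
  assumes a: "a \<in> gideal L R" and p: "p \<in> ncpoly L"
  shows "pmul a p \<in> gideal L R"
proof -
  from p have f: "finite (supp p)" and s: "\<forall>w\<in>supp p. set w \<subseteq> L" by (auto simp: ncpoly_iff)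
  have "pmul a p = psum (\<lambda>w. psmult (p w) (pmul a (mono w))) (supp p)"
    by (subst psum_monomials[OF f, symmetric]) (simp add: pmul_psum_right pmul_psmult_right)
  also have "\<dots> \<in> gideal L R"
    using f s a by (intro gideal_psum gideal.smult gideal_mono_right) auto
  finally show ?thesis .
qed

definition cong_mod :: "'l ncp set \<Rightarrow> 'l ncp \<Rightarrow> 'l ncp \<Rightarrow> bool" where
  "cong_mod I p q \<longleftrightarrow> pdiff p q \<in> I"

lemma cong_mod_refl: "cong_mod (gideal L R) p p"
  by (simp add: cong_mod_def gideal.zero)

lemma cong_mod_sym: "cong_mod (gideal L R) p q \<Longrightarrow> cong_mod (gideal L R) q p"
proof -
  assume "cong_mod (gideal L R) p q"
  then have "psmult (-1) (pdiff p q) \<in> gideal L R" unfolding cong_mod_def by (rule gideal.smult)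
  moreover have "psmult (-1) (pdiff p q) = pdiff q p" by (rule ext) (simp add: ncp_app)
  ultimately show ?thesis unfolding cong_mod_def by simp
qed

lemma cong_mod_trans [trans]:
  "cong_mod (gideal L R) p q \<Longrightarrow> cong_mod (gideal L R) q r \<Longrightarrow> cong_mod (gideal L R) p r"
proof -
  assume "cong_mod (gideal L R) p q" "cong_mod (gideal L R) q r"
  then have "padd (pdiff p q) (pdiff q r) \<in> gideal L R" unfolding cong_mod_def by (rule gideal.add)
  moreover have "padd (pdiff p q) (pdiff q r) = pdiff p r" by (rule ext) (simp add: ncp_app)
  ultimately show ?thesis unfolding cong_mod_def by simp
qed

lemma cong_mod_eq_trans [trans]: "cong_mod I p q \<Longrightarrow> q = r \<Longrightarrow> cong_mod I p r"
  by simp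
lemma eq_cong_mod_trans [trans]: "p = q \<Longrightarrow> cong_mod I q r \<Longrightarrow> cong_mod I p r"
  by simp

lemma cong_mod_padd:
  "cong_mod (gideal L R) p q \<Longrightarrow> cong_mod (gideal L R) p' q' \<Longrightarrow>
   cong_mod (gideal L R) (padd p p') (padd q q')"
proof -
  assume "cong_mod (gideal L R) p q" "cong_mod (gideal L R) p' q'"
  then have "padd (pdiff p q) (pdiff p' q') \<in> gideal L R" unfolding cong_mod_def by (rule gideal.add)
  moreover have "padd (pdiff p q) (pdiff p' q') = pdiff (padd p p') (padd q q')" by (rule ext) (simp add: ncp_app)
  ultimately show ?thesis unfolding cong_mod_def by simp
qed

lemma cong_mod_psmult: "cong_mod (gideal L R) p q \<Longrightarrow> cong_mod (gideal L R) (psmult c p) (psmult c q)"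
proof -
  assume "cong_mod (gideal L R) p q"
  then have "psmult c (pdiff p q) \<in> gideal L R" unfolding cong_mod_def by (rule gideal.smult)
  moreover have "psmult c (pdiff p q) = pdiff (psmult c p) (psmult c q)" by (rule ext) (simp add: ncp_app algebra_simps)
  ultimately show ?thesis unfolding cong_mod_def by simp
qed

lemma cong_mod_psum:
  "finite S \<Longrightarrow> (\<And>x. x \<in> S \<Longrightarrow> cong_mod (gideal L R) (f x) (g x)) \<Longrightarrow>
   cong_mod (gideal L R) (psum f S) (psum g S)"
proof -
  assume "finite S" "\<And>x. x \<in> S \<Longrightarrow> cong_mod (gideal L R) (f x) (g x)"
  then have "psum (\<lambda>x. pdiff (f x) (g x)) S \<in> gideal L R" unfolding cong_mod_def by (rule gideal_psum)
  moreover have "psum (\<lambda>x. pdiff (f x) (g x)) S = pdiff (psum f S) (psum g S)"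
    by (rule ext) (simp add: ncp_app sum_subtractf)
  ultimately show ?thesis unfolding cong_mod_def by simp
qed

lemma cong_mod_pmul_right:
  "cong_mod (gideal L R) p q \<Longrightarrow> r \<in> ncpoly L \<Longrightarrow> cong_mod (gideal L R)
      (pmul p r) (pmul q r)"
  unfolding cong_mod_def by (simp add: gideal_pmul_right pmul_pdiff_left[symmetric])

lemma cong_mod_pzero_iff: "cong_mod I p pzero \<longleftrightarrow> p \<in> I"
proof -
  have "pdiff p pzero = p" by (rule ext) (simp add: ncp_app)
  then show ?thesis by (simp add: cong_mod_def)
qed

section \<open>Substitution homomorphisms\<close>

lemma subst_superset:
  assumes "finite S" "supp p \<subseteq> S"
  shows "subst g p = psum (\<lambda>w. psmult (p w) (wimg g w)) S"
proof (rule ext)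
  fix v
  have "subst g p v = (\<Sum>w\<in>supp p. p w * wimg g w v)" by (simp add: subst_def supp_def)
  also have "\<dots> = (\<Sum>w\<in>S. p w * wimg g w v)"
    using assms by (intro sum.mono_neutral_left) (auto simp: supp_def)
  finally show "subst g p v = psum (\<lambda>w. psmult (p w) (wimg g w)) S v" by (simp add: ncp_app)
qed

lemma subst_padd:
  assumes "finite (supp p)" "finite (supp q)"
  shows "subst g (padd p q) = padd (subst g p) (subst g q)"
proof -
  have "supp (padd p q) \<subseteq> supp p \<union> supp q" by (auto simp: supp_def ncp_app)
  with assms show ?thesis
    by (subst (1 2 3) subst_superset[where S = "supp p \<union> supp q"])
       (auto intro!: ext simp: ncp_app distrib_right sum.distrib)
qed

lemma subst_pdiff:
  assumes "finite (supp p)" "finite (supp q)"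
  shows "subst g (pdiff p q) = pdiff (subst g p) (subst g q)"
proof -
  have "supp (pdiff p q) \<subseteq> supp p \<union> supp q" by (auto simp: supp_def ncp_app)
  with assms show ?thesis
    by (subst (1 2 3) subst_superset[where S = "supp p \<union> supp q"])
       (auto intro!: ext simp: ncp_app left_diff_distrib sum_subtractf)
qed

lemma subst_psmult:
  assumes "finite (supp p)"
  shows "subst g (psmult c p) = psmult c (subst g p)"
proof -
  have "supp (psmult c p) \<subseteq> supp p" by (auto simp: supp_def ncp_app)
  with assms show ?thesis
    by (subst (1 2) subst_superset[where S = "supp p"])
       (auto intro!: ext simp: ncp_app sum_distrib_left mult.assoc)
qed

lemma subst_psum:
  "finite S \<Longrightarrow> (\<And>x. x \<in> S \<Longrightarrow> finite (supp (f x))) \<Longrightarrow>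
   subst g (psum f S) = psum (\<lambda>x. subst g (f x)) S"
proof (induction S rule: finite_induct)
  case empty
  have "supp (psum f {}) = {}" by (auto simp: supp_def ncp_app)
  then show ?case by (auto simp: subst_def supp_def ncp_app intro!: ext)
next
  case (insert x F)
  have "psum f (insert x F) = padd (f x) (psum f F)" using insert by (intro ext) (simp add: ncp_app)
  then have "subst g (psum f (insert x F)) = padd (subst g (f x)) (subst g (psum f F))"
    using insert by (simp add: subst_padd)
  also have "subst g (psum f F) = psum (\<lambda>x. subst g (f x)) F"
    using insert by simp
  also have "padd (subst g (f x)) (psum (\<lambda>x. subst g (f x)) F) = psum (\<lambda>x. subst g (f x)) (insert x F)"
    using insert by (intro ext) (simp add: ncp_app)
  finally show ?case .
qed

lemma subst_mono: "subst g (mono w) = wimg g w"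
  by (subst subst_superset[where S = "{w}"]) (auto simp: supp_def mono_def ncp_app intro!: ext)

lemma subst_pzero [simp]: "subst g pzero = pzero"
  by (auto intro!: ext simp: subst_def ncp_app)

lemma wimg_single: "wimg g [x] = g x"
  by (simp add: wimg_def pmul_pconst_right)

lemma wimg_pair: "wimg g [x, y] = pmul (g x) (g y)"
  by (simp add: wimg_def pmul_pconst_right)

lemma subst_pconst: "subst g (pconst c) = pconst c"
proof -
  have "subst g (pconst c) = psmult c (pconst 1)"
    by (simp add: pconst_eq_psmult_mono subst_psmult subst_mono wimg_def)
  also have "\<dots> = pconst c" by (rule ext) (simp add: ncp_app pconst_def)
  finally show ?thesis .
qed

lemma subst_letter: "subst g (mono [x]) = g x"
  by (simp add: subst_mono wimg_single)
lemma subst_letter_pair: "subst g (mono [x, y]) = pmul (g x) (g y)"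
  by (simp add: subst_mono wimg_pair)

lemma subst_id: "finite (supp p) \<Longrightarrow> subst (\<lambda>x. mono [x]) p = p"
proof -
  have "wimg (\<lambda>x. mono [x]) w = mono w" for w :: "'a list"
    by (induction w) (simp_all add: wimg_def pconst_eq_psmult_mono pmul_mono_mono)
  then show "finite (supp p) \<Longrightarrow> subst (\<lambda>x. mono [x]) p = p"
    by (simp add: subst_superset[where S = "supp p"] psum_monomials)
qed

lemma pstar_ug: "pstar flipL (ug i j) = ugs i j"
  by (rule ext) (auto simp: pstar_def ug_def ugs_def mono_def flipL_def)

lemma pstar_pzero [simp]: "pstar fl pzero = pzero"
  by (rule ext) (simp add: pstar_def ncp_app)

lemma cp_letter: "cp c (mono [x]) = mono [(x, c)]"
  by (rule ext) (auto simp: cp_def mono_def)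

lemma cp_pzero [simp]: "cp c pzero = pzero"
  by (rule ext) (simp add: cp_def ncp_app)

lemma simg_ug_id: "simg (\<lambda>(i, j). ug i j) = (\<lambda>x. mono [x])"
proof (rule ext)
  fix x :: letter
  obtain i j b where x: "x = (i, j, b)" by (cases x)
  show "simg (\<lambda>(i, j). ug i j) x = mono [x]"
    using pstar_ug[of i j] by (cases b) (simp_all add: x simg_def ug_eq_mono ugs_eq_mono)
qed

lemma finite_supp_ug: "finite (supp (ug i j))"
  by (simp add: ug_eq_mono)

lemma pmul_ug_ugs: "pmul (ug i k) (ugs j k) = mono [(i, k, False), (j, k, True)]"
  by (simp add: ug_eq_mono ugs_eq_mono pmul_mono_mono)
lemma pmul_ugs_ug: "pmul (ugs k i) (ug k j) = mono [(k, i, True), (k, j, False)]"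
  by (simp add: ug_eq_mono ugs_eq_mono pmul_mono_mono)
lemma pmul_ug_ug: "pmul (ug a k) (ug b l) = mono [(a, k, False), (b, l, False)]"
  by (simp add: ug_eq_mono pmul_mono_mono)


section \<open>Structure constants of a finite quantum set\<close>

lemma finite_qbasis [simp]: "finite (qbasis ns)"
proof (rule finite_subset)
  show "qbasis ns \<subseteq> (SIGMA b:{..<length ns}. {..<ns!b} \<times> {..<ns!b})"
    by (auto simp: qbasis_def)
qed auto

lemma qbasis_iff: "(b, r, s) \<in> qbasis ns \<longleftrightarrow> b < length ns \<and> r < ns ! b \<and> s < ns ! b"
  by (simp add: qbasis_def)

lemma finite_supp_qut_rel: "s \<in> qut_rel ns As \<Longrightarrow> finite (supp s)"
proof -
  have "finite (supp s)" if "s \<in> rel_qset ns" for s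
    using that unfolding rel_qset_def by (auto simp: pmul_ug_ugs pmul_ugs_ug pmul_ug_ug finite_supp_ug)
  moreover have "finite (supp s)" if "s \<in> rel_graph ns A" for s A
    using that unfolding rel_graph_def by (auto simp: finite_supp_ug)
  ultimately show "s \<in> qut_rel ns As \<Longrightarrow> finite (supp s)"
    unfolding qut_rel_def by blast
qed

lemma mc_eq_left: "mc ns c a b = (if a = (fst c, fst (snd c), fst (snd b)) then
   (if fst b = fst c \<and> snd (snd b) = snd (snd c) then complex_of_real (1 / sqrt (real (ns ! fst c))) else
       0) else 0)"
  by (cases c; cases a; cases b) (auto simp: mc_def)

lemma mc_eq_right: "mc ns c a b = (if b = (fst c, snd (snd a), snd (snd c)) then
   (if fst a = fst c \<and> fst (snd a) = fst (snd c) then complex_of_real (1 / sqrt (real (ns ! fst c))) else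
       0) else 0)"
  by (cases c; cases a; cases b) (auto simp: mc_def)

lemma mc_eq_out: "mc ns c a b = (if c = (fst a, fst (snd a), snd (snd b)) then
   (if fst b = fst a \<and> snd (snd a) = fst (snd b) then complex_of_real (1 / sqrt (real (ns ! fst a))) else
       0) else 0)"
  by (cases c; cases a; cases b) (auto simp: mc_def)

lemma eta_eq: "eta ns (b, r, s) = (if r = s then complex_of_real (sqrt (real (ns ! b))) else 0)"
  by (simp add: eta_def)

lemma cnj_eta [simp]: "cnj (eta ns c) = eta ns c"
  by (cases c) (simp add: eta_def)

lemma inv_sqrt_mult_sqrt: "0 < n \<Longrightarrow> complex_of_real (1 / sqrt (real n)) * complex_of_real
    (sqrt (real n)) = 1"
  by (simp flip: of_real_mult)

lemma itr_in: "c \<in> qbasis ns \<Longrightarrow> itr c \<in> qbasis ns"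
  by (cases c) (auto simp: itr_def qbasis_iff)

lemma itr_itr [simp]: "itr (itr c) = c"
  by (cases c) (simp add: itr_def)

lemma mc_eta_left:
  assumes q: "qset ns" and c: "c \<in> qbasis ns" and b: "b \<in> qbasis ns"
  shows "(\<Sum>a\<in>qbasis ns. mc ns c a b * eta ns a) = delta c b"
proof -
  obtain b0 r s where cc: "c = (b0, r, s)" by (cases c)
  obtain b2 r2 s2 where bb: "b = (b2, r2, s2)" by (cases b)
  have pos: "0 < ns ! b0" using c q by (simp add: cc qbasis_iff qset_def)
  have "(\<Sum>a\<in>qbasis ns. mc ns c a b * eta ns a) =
     (if (b0, r, r2) \<in> qbasis ns then
         (if b2 = b0 \<and> s2 = s then complex_of_real (1 / sqrt (real (ns ! b0))) else 0)
        * eta ns (b0, r, r2) else 0)"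
    unfolding mc_eq_left by (simp add: cc bb if_distrib[where f = "\<lambda>x. x * _"] cong: if_cong)
  also have "\<dots> = delta c b"
    using c b pos by (auto simp: cc bb delta_def eta_eq qbasis_iff inv_sqrt_mult_sqrt)
  finally show ?thesis .
qed

lemma mc_eta_right:
  assumes q: "qset ns" and c: "c \<in> qbasis ns" and a: "a \<in> qbasis ns"
  shows "(\<Sum>b\<in>qbasis ns. mc ns c a b * eta ns b) = delta c a"
proof -
  obtain b0 r s where cc: "c = (b0, r, s)" by (cases c)
  obtain b1 r1 s1 where aa: "a = (b1, r1, s1)" by (cases a)
  have pos: "0 < ns ! b0" using c q by (simp add: cc qbasis_iff qset_def)
  have "(\<Sum>b\<in>qbasis ns. mc ns c a b * eta ns b) =
     (if (b0, s1, s) \<in> qbasis ns then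
         (if b1 = b0 \<and> r1 = r then complex_of_real (1 / sqrt (real (ns ! b0))) else 0)
        * eta ns (b0, s1, s) else 0)"
    unfolding mc_eq_right by (simp add: cc aa if_distrib[where f = "\<lambda>x. x * _"] cong: if_cong)
  also have "\<dots> = delta c a"
    using c a pos by (auto simp: cc aa delta_def eta_eq qbasis_iff inv_sqrt_mult_sqrt)
  finally show ?thesis .
qed

lemma sum_eta_mc:
  assumes q: "qset ns" and k: "k \<in> qbasis ns" and l: "l \<in> qbasis ns"
  shows "(\<Sum>c\<in>qbasis ns. eta ns c * mc ns c k l) = (if l = itr k then 1 else 0)"
proof -
  obtain b1 r1 s1 where kk: "k = (b1, r1, s1)" by (cases k)
  obtain b2 r2 s2 where ll: "l = (b2, r2, s2)" by (cases l)
  have pos: "0 < ns ! b1" using k q by (simp add: kk qbasis_iff qset_def)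
  have "(\<Sum>c\<in>qbasis ns. eta ns c * mc ns c k l) =
     (if (b1, r1, s2) \<in> qbasis ns then eta ns (b1, r1, s2) *
        (if b2 = b1 \<and> s1 = r2 then complex_of_real (1 / sqrt (real (ns ! b1))) else 0) else 0)"
    unfolding mc_eq_out by (simp add: kk ll if_distrib[where f = "\<lambda>x. _ * x"] cong: if_cong)
  also have "\<dots> = (if l = itr k then 1 else 0)"
    using k l pos by (auto simp: kk ll itr_def eta_eq qbasis_iff inv_sqrt_mult_sqrt mult.commute)
  finally show ?thesis .
qed

lemma mc_eta_eta:
  assumes q: "qset ns" and c: "c \<in> qbasis ns"
  shows "(\<Sum>k\<in>qbasis ns. \<Sum>l\<in>qbasis ns. mc ns c k l * eta ns k * eta ns l) = eta ns c"
proof -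
  have "(\<Sum>k\<in>qbasis ns. \<Sum>l\<in>qbasis ns. mc ns c k l * eta ns k * eta ns l)
      = (\<Sum>k\<in>qbasis ns. eta ns k * (\<Sum>l\<in>qbasis ns. mc ns c k l * eta ns l))"
    by (simp add: sum_distrib_left mult_ac)
  also have "\<dots> = (\<Sum>k\<in>qbasis ns. eta ns k * delta c k)"
    using q c by (simp add: mc_eta_right)
  also have "\<dots> = eta ns c"
    using c by (simp add: delta_def if_distrib[where f = "\<lambda>x. _ * x"] cong: if_cong)
  finally show ?thesis .
qed

lemma card_qbasis_row:
  assumes "b < length ns" "r < ns ! b"
  shows "card {k \<in> qbasis ns. fst k = b \<and> fst (snd k) = r} = ns ! b"
proof -
  have "{k \<in> qbasis ns. fst k = b \<and> fst (snd k) = r} = (\<lambda>t. (b, r, t)) ` {..<ns ! b}"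
    using assms by (auto simp: qbasis_def)
  moreover have "inj_on (\<lambda>t. (b, r, t)) {..<ns ! b}" by (auto simp: inj_on_def)
  ultimately show ?thesis by (simp add: card_image)
qed

lemma schur_idm:
  assumes q: "qset ns" and c: "c \<in> qbasis ns" and d: "d \<in> qbasis ns"
  shows "schur ns idm idm c d = idm c d"
proof -
  obtain b0 r s where cc: "c = (b0, r, s)" by (cases c)
  have pos: "0 < ns ! b0" and bl: "b0 < length ns" and rs: "r < ns ! b0" "s < ns ! b0"
    using c q by (auto simp: cc qbasis_iff qset_def)
  let ?v = "if c = d then complex_of_real (1 / real (ns ! b0)) else 0"
  have row: "(\<Sum>l\<in>qbasis ns. mc ns c k l * cnj (mc ns d k l)) =
      (if fst k = b0 \<and> fst (snd k) = r then ?v else 0)" if k: "k \<in> qbasis ns" for k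
  proof -
    obtain b1 r1 s1 where kk: "k = (b1, r1, s1)" by (cases k)
    have "(\<Sum>l\<in>qbasis ns. mc ns c k l * cnj (mc ns d k l)) =
      (if (b0, s1, s) \<in> qbasis ns then
          (if b1 = b0 \<and> r1 = r then complex_of_real (1 / sqrt (real (ns ! b0))) else 0)
          * cnj (mc ns d k (b0, s1, s)) else 0)"
      unfolding mc_eq_right[of ns c] by (simp add: cc kk if_distrib[where f = "\<lambda>x. x * _"] cong: if_cong)
    also have "\<dots> = (if fst k = b0 \<and> fst (snd k) = r then ?v else 0)"
      using k pos rs bl
      by (cases d) (auto simp: cc kk qbasis_iff mc_def real_sqrt_mult[symmetric] simp flip: of_real_mult)
    finally show ?thesis .
  qed
  have "schur ns idm idm c d = (\<Sum>k\<in>qbasis ns. \<Sum>l\<in>qbasis ns. mc ns c k l * cnj (mc ns d k l))"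
    unfolding schur_def idm_def
    by (simp add: if_distrib[where f = "\<lambda>x. _ * x"] if_distrib[where f = "\<lambda>x. x * _"] cong: if_cong)
  also have "\<dots> = (\<Sum>k\<in>qbasis ns. if fst k = b0 \<and> fst (snd k) = r then ?v else 0)"
    by (intro sum.cong refl row)
  also have "\<dots> = ?v * of_nat (card {k \<in> qbasis ns. fst k = b0 \<and> fst (snd k) = r})"
    by (simp add: sum.If_cases Int_def conj_commute)
  also have "\<dots> = idm c d"
    using pos bl rs by (simp add: card_qbasis_row idm_def)
  finally show ?thesis .
qed

lemma sum_swap_outer2_inner4:
  "(\<Sum>c\<in>S. \<Sum>e\<in>S. \<Sum>k\<in>S. \<Sum>l\<in>S. \<Sum>k'\<in>S. \<Sum>l'\<in>S. F c e k l k' l') =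
   (\<Sum>k\<in>S. \<Sum>l\<in>S. \<Sum>k'\<in>S. \<Sum>l'\<in>S. \<Sum>c\<in>S. \<Sum>e\<in>S. F c e k l k' l')"
proof -
  have "(\<Sum>c\<in>S. \<Sum>e\<in>S. \<Sum>k\<in>S. \<Sum>l\<in>S. \<Sum>k'\<in>S. \<Sum>l'\<in>S. F c e k l k' l') =
        (\<Sum>(c,e,k,l,k',l')\<in>S\<times>S\<times>S\<times>S\<times>S\<times>S. F c e k l k' l')"
    by (simp add: sum.cartesian_product split_def)
  also have "\<dots> = (\<Sum>(k,l,k',l',c,e)\<in>S\<times>S\<times>S\<times>S\<times>S\<times>S. F c e k l k' l')"
    by (rule sum.reindex_bij_witness[where i = "\<lambda>(k,l,k',l',c,e). (c,e,k,l,k',l')"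
          and j = "\<lambda>(c,e,k,l,k',l'). (k,l,k',l',c,e)"]) auto
  also have "\<dots> = (\<Sum>k\<in>S. \<Sum>l\<in>S. \<Sum>k'\<in>S. \<Sum>l'\<in>S. \<Sum>c\<in>S.
      \<Sum>e\<in>S. F c e k l k' l')"
    by (simp add: sum.cartesian_product split_def)
  finally show ?thesis .
qed

lemma eta_schur_eta:
  assumes q: "qset ns"
  shows "(\<Sum>c\<in>qbasis ns. \<Sum>e\<in>qbasis ns. eta ns c * schur ns A B c e * eta ns e) =
         (\<Sum>k\<in>qbasis ns. \<Sum>k'\<in>qbasis ns. A k k' * B (itr k) (itr k'))"
proof -
  let ?B = "qbasis ns" and ?e = "eta ns"
  have "(\<Sum>c\<in>?B. \<Sum>e\<in>?B. ?e c * schur ns A B c e * ?e e)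
      = (\<Sum>c\<in>?B. \<Sum>e\<in>?B. \<Sum>k\<in>?B. \<Sum>l\<in>?B. \<Sum>k'\<in>?B. \<Sum>l'\<in>?B.
          (?e c * mc ns c k l) * (A k k' * B l l') * (cnj (mc ns e k' l') * ?e e))"
    unfolding schur_def by (simp add: sum_distrib_left sum_distrib_right mult_ac)
  also have "\<dots> = (\<Sum>k\<in>?B. \<Sum>l\<in>?B. \<Sum>k'\<in>?B. \<Sum>l'\<in>?B.
      (\<Sum>c\<in>?B. ?e c * mc ns c k l) * (A k k' * B l l') * cnj (\<Sum>e\<in>?B. ?e e * mc ns e k' l'))"
    by (subst sum_swap_outer2_inner4) (simp add: sum_distrib_left sum_distrib_right mult_ac)
  also have "\<dots> = (\<Sum>k\<in>?B. \<Sum>l\<in>?B. \<Sum>k'\<in>?B. \<Sum>l'\<in>?B.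
      (if l = itr k then 1 else 0) * (A k k' * B l l') * (if l' = itr k' then 1 else 0))"
    using q by (intro sum.cong refl) (simp add: sum_eta_mc)
  also have "\<dots> = (\<Sum>k\<in>?B. \<Sum>k'\<in>?B. \<Sum>l\<in>?B. if l = itr k then A k k' * B (itr k)
      (itr k') else 0)"
    by (subst sum.swap) (simp add: if_distrib[where f = "\<lambda>x. x * _"] if_distrib[where f = "\<lambda>x. _ * x"]
        itr_in cong: if_cong)
  also have "\<dots> = (\<Sum>k\<in>?B. \<Sum>k'\<in>?B. A k k' * B (itr k) (itr k'))"
    by (intro sum.cong refl) (simp add: itr_in)
  finally show ?thesis .
qed

lemma qgraph_entry_itr: "qgraph ns A \<Longrightarrow> k \<in> qbasis ns \<Longrightarrow> k' \<in> qbasis ns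
    \<Longrightarrow> A (itr k) (itr k') = cnj (A k k')"
  unfolding qgraph_def barm_def by (metis complex_cnj_cnj)

lemma eta_mult_eta: "eta ns c * eta ns c = complex_of_real ((cmod (eta ns c))\<^sup>2)"
  using complex_norm_square[of "eta ns c"] by simp

lemma sum_norm_eta_pos: "qset ns \<Longrightarrow> 0 < (\<Sum>c\<in>qbasis ns. (cmod (eta ns c))\<^sup>2)"
proof (rule sum_pos2[OF finite_qbasis])
  assume q: "qset ns"
  then show "(0, 0, 0) \<in> qbasis ns" by (auto simp: qset_def qbasis_iff)
  show "0 < (cmod (eta ns (0, 0, 0)))\<^sup>2" using q by (simp add: qset_def eta_eq)
qed auto

lemma dregular_nonneg:
  assumes q: "qset ns" and g: "qgraph ns A" and dr: "dregular ns A d"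
  shows "0 \<le> d"
proof -
  let ?B = "qbasis ns" and ?e = "eta ns"
  have "complex_of_real d * (\<Sum>c\<in>?B. ?e c * ?e c) = (\<Sum>c\<in>?B. ?e c * (\<Sum>e\<in>?B. A c e * ?e e))"
    using dr unfolding dregular_def by (simp add: sum_distrib_left mult_ac)
  also have "\<dots> = (\<Sum>c\<in>?B. \<Sum>e\<in>?B. ?e c * A c e * ?e e)"
    by (simp add: sum_distrib_left mult_ac)
  also have "\<dots> = (\<Sum>c\<in>?B. \<Sum>e\<in>?B. ?e c * schur ns A A c e * ?e e)"
    using g unfolding qgraph_def by (intro sum.cong refl) auto
  also have "\<dots> = (\<Sum>k\<in>?B. \<Sum>k'\<in>?B. A k k' * cnj (A k k'))"
    using q g by (simp add: eta_schur_eta qgraph_entry_itr)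
  also have "\<dots> = complex_of_real (\<Sum>k\<in>?B. \<Sum>k'\<in>?B. (cmod (A k k'))\<^sup>2)"
    by (simp add: complex_norm_square del: of_real_power)
  finally have "complex_of_real (d * (\<Sum>c\<in>?B. (cmod (?e c))\<^sup>2)) =
      complex_of_real (\<Sum>k\<in>?B. \<Sum>k'\<in>?B. (cmod (A k k'))\<^sup>2)"
    by (simp add: eta_mult_eta)
  then have "d * (\<Sum>c\<in>?B. (cmod (?e c))\<^sup>2) = (\<Sum>k\<in>?B. \<Sum>k'\<in>?B. (cmod (A k k'))\<^sup>2)"
    by (rule of_real_eq_iff[THEN iffD1])
  then have "0 \<le> d * (\<Sum>c\<in>?B. (cmod (?e c))\<^sup>2)" by (simp add: sum_nonneg)
  then show ?thesis using sum_norm_eta_pos[OF q] by (simp add: zero_le_mult_iff)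
qed

section \<open>The tower of copies\<close>

locale tower =
  fixes ns :: "nat list" and n :: nat and As :: "nat \<Rightarrow> lmap" and dg :: "nat \<Rightarrow> real"
  assumes qset_ns: "qset ns"
    and qgraph_As: "\<And>a. a \<in> {1..n} \<Longrightarrow> qgraph ns (As a)"
    and dregular_As: "\<And>a. a \<in> {1..n} \<Longrightarrow> dregular ns (As a) (dg a)"
begin

abbreviation "K \<equiv> length ns"
abbreviation "B \<equiv> qbasis ns"

text \<open>\<open>X'\<close> consists of the levels \<open>0, \<dots>, n\<close>, each a copy of \<open>X\<close>;
  block \<open>b\<close> of level \<open>a\<close> is block \<open>a * K + b\<close> of \<open>X'\<close>.\<close>

definition ns' :: "nat list" where "ns' = map (\<lambda>b. ns ! (b mod K)) [0..<Suc n * K]"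
abbreviation "B' \<equiv> qbasis ns'"

definition level :: "idx \<Rightarrow> nat" where "level c = fst c div K"
definition base :: "idx \<Rightarrow> idx" where "base c = (fst c mod K, fst (snd c), snd (snd c))"
definition lift :: "nat \<Rightarrow> idx \<Rightarrow> idx" where "lift a c
    = (a * K + fst c, fst (snd c), snd (snd c))"

definition tower_block :: "nat \<Rightarrow> nat \<Rightarrow> lmap" where
  "tower_block a b x y = (if a = b \<and> 1 \<le> a then As a x y else 0) + (if a = Suc b then idm x y else 0)"

lemma tower_block_eq:
  "tower_block a b = (if a = b \<and> 1 \<le> a then As a else if a = Suc b then idm else (\<lambda>_ _. 0))"
  by (auto simp: tower_block_def intro!: ext)

definition A' :: lmap where "A' c d = tower_block (level c) (level d) (base c) (base d)"

lemma K_pos: "0 < K" using qset_ns by (simp add: qset_def)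

lemma ns'_nth: "b < Suc n * K \<Longrightarrow> ns' ! b = ns ! (b mod K)"
  by (simp add: ns'_def)

lemma length_ns': "length ns' = Suc n * K" by (simp add: ns'_def)

lemma B'_iff: "c \<in> B' \<longleftrightarrow> level c \<le> n \<and> base c \<in> B"
proof -
  obtain b r s where cc: "c = (b, r, s)" by (cases c)
  have "b < Suc n * K \<longleftrightarrow> b div K \<le> n"
    using K_pos by (metis less_Suc_eq_le less_mult_imp_div_less div_less_iff_less_mult mult.commute)
  moreover have "b mod K < K" using K_pos by simp
  ultimately show ?thesis
    by (auto simp: cc qbasis_iff level_def base_def length_ns' ns'_nth)
qed

lemma B_fst_less: "x \<in> B \<Longrightarrow> fst x < K" by (cases x) (simp add: qbasis_iff)

lemma level_lift[simp]: "x \<in> B \<Longrightarrow> level (lift a x) = a"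
  using B_fst_less[of x] K_pos by (simp add: level_def lift_def)

lemma base_lift[simp]: "x \<in> B \<Longrightarrow> base (lift a x) = x"
  using B_fst_less[of x] by (cases x) (simp add: base_def lift_def)

lemma lift_level_base[simp]: "lift (level c) (base c) = c"
  by (cases c) (simp add: level_def base_def lift_def)

lemma lift_in_B': "x \<in> B \<Longrightarrow> a \<le> n \<Longrightarrow> lift a x \<in> B'"
  by (simp add: B'_iff)

lemma base_in_B: "c \<in> B' \<Longrightarrow> base c \<in> B" by (simp add: B'_iff)
lemma level_le: "c \<in> B' \<Longrightarrow> level c \<le> n" by (simp add: B'_iff)

lemma lift_0[simp]: "lift 0 x = x" by (cases x) (simp add: lift_def)

lemma B_in_B': "x \<in> B \<Longrightarrow> x \<in> B'"
  using lift_in_B'[of x 0] by simp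

lemma B_subset_B': "B \<subseteq> B'"
  using B_in_B' by blast

lemma level_B: "x \<in> B \<Longrightarrow> level x = 0"
  using level_lift[of x 0] by simp
lemma base_B: "x \<in> B \<Longrightarrow> base x = x"
  using base_lift[of x 0] by simp

lemma delta_base: "level i = level j \<Longrightarrow> delta (base i) (base j) = delta i j"
proof -
  assume "level i = level j"
  then have "base i = base j \<longleftrightarrow> i = j"
    using lift_level_base[of i] lift_level_base[of j] by auto
  then show ?thesis by (simp add: delta_def)
qed

lemma qset_ns': "qset ns'"
proof -
  have "ns' \<noteq> []" using K_pos by (simp add: ns'_def)
  moreover have "\<forall>b<length ns'. 0 < ns' ! b"
    using qset_ns K_pos by (auto simp: length_ns' ns'_nth qset_def)
  ultimately show ?thesis by (simp add: qset_def)
qed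

lemma sum_B': "(\<Sum>c\<in>B'. f c) = (\<Sum>a\<le>n. \<Sum>x\<in>B. f (lift a x))"
proof -
  have "(\<Sum>c\<in>B'. f c) = (\<Sum>(a, x)\<in>{..n} \<times> B. f (lift a x))"
    by (rule sum.reindex_bij_witness[where i = "\<lambda>(a, x). lift a x" and j = "\<lambda>c. (level c, base c)"])
       (auto simp: lift_in_B' base_in_B level_le)
  also have "\<dots> = (\<Sum>a\<le>n. \<Sum>x\<in>B. f (lift a x))" by (simp add: sum.cartesian_product)
  finally show ?thesis .
qed

lemma sum_B'_one_level:
  assumes "a \<le> n" "\<And>c. c \<in> B' \<Longrightarrow> level c \<noteq> a \<Longrightarrow> f c = 0"
  shows "(\<Sum>c\<in>B'. f c) = (\<Sum>x\<in>B. f (lift a x))"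
proof -
  have "(\<Sum>c\<in>B'. f c) = (\<Sum>b\<le>n. \<Sum>x\<in>B. f (lift b x))" by (rule sum_B')
  also have "\<dots> = (\<Sum>x\<in>B. f (lift a x))"
  proof (rule sum.mono_neutral_right[THEN trans])
    show "(\<Sum>b\<in>{a}. \<Sum>x\<in>B. f (lift b x)) = (\<Sum>x\<in>B. f (lift a x))" by simp
  qed (use assms in \<open>auto simp: lift_in_B'\<close>)
  finally show ?thesis .
qed

lemma psum_B'_one_level:
  assumes "a \<le> n" "\<And>c. c \<in> B' \<Longrightarrow> level c \<noteq> a \<Longrightarrow> f c = pzero"
  shows "psum f B' = psum (\<lambda>x. f (lift a x)) B"
proof (rule ext)
  fix w
  have "(\<Sum>c\<in>B'. f c w) = (\<Sum>x\<in>B. f (lift a x) w)"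
    by (rule sum_B'_one_level) (use assms in \<open>auto simp: ncp_app(5)\<close>)
  then show "psum f B' w = psum (\<lambda>x. f (lift a x)) B w" by (simp add: ncp_app)
qed

lemma mc_ns': "c \<in> B' \<Longrightarrow> mc ns' c k l
    = (if level k = level c \<and> level l = level c then mc ns (base c) (base k) (base l) else 0)"
proof -
  assume c: "c \<in> B'"
  obtain b r s where cc: "c = (b, r, s)" by (cases c)
  obtain b1 r1 s1 where kk: "k = (b1, r1, s1)" by (cases k)
  obtain b2 r2 s2 where ll: "l = (b2, r2, s2)" by (cases l)
  have bl: "b < Suc n * K" using c by (simp add: cc qbasis_iff length_ns')
  have e: "\<And>x y. (x = y) \<longleftrightarrow> (x div K = y div K \<and> x mod K = y mod K)"
    by (metis div_mult_mod_eq)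
  show ?thesis
    using bl by (simp add: cc kk ll mc_def level_def base_def ns'_nth) (use e in blast)
qed

lemma eta_ns': "c \<in> B' \<Longrightarrow> eta ns' c = eta ns (base c)"
  by (cases c) (simp add: eta_def base_def ns'_nth qbasis_iff length_ns')

lemma eta_ns'_lift: "x \<in> B \<Longrightarrow> a \<le> n \<Longrightarrow> eta ns' (lift a x) = eta ns x"
  by (simp add: eta_ns' lift_in_B')

lemma level_itr [simp]: "level (itr c) = level c" by (cases c) (simp add: itr_def level_def)
lemma base_itr [simp]: "base (itr c) = itr (base c)" by (cases c) (simp add: itr_def base_def)

lemma sum_mc_ns'_left:
  assumes c: "c \<in> B'"
  shows "(\<Sum>k\<in>B'. \<Sum>l\<in>B'. mc ns' c k l * F k l)
      = (\<Sum>x\<in>B. \<Sum>y\<in>B. mc ns (base c) x y * F (lift (level c) x) (lift (level c) y))"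
proof -
  have a: "level c \<le> n" using c by (rule level_le)
  have "(\<Sum>k\<in>B'. \<Sum>l\<in>B'. mc ns' c k l * F k l)
      = (\<Sum>x\<in>B. \<Sum>l\<in>B'. mc ns' c (lift (level c) x) l * F (lift (level c) x) l)"
    by (rule sum_B'_one_level[OF a]) (simp add: mc_ns'[OF c])
  also have "\<dots> = (\<Sum>x\<in>B. \<Sum>y\<in>B. mc ns' c (lift (level c) x) (lift (level c) y) * F
      (lift (level c) x) (lift (level c) y))"
    by (intro sum.cong refl sum_B'_one_level[OF a]) (simp add: mc_ns'[OF c])
  also have "\<dots> = (\<Sum>x\<in>B. \<Sum>y\<in>B. mc ns (base c) x y * F (lift (level c) x) (lift (level c) y))"
    by (intro sum.cong refl) (simp add: mc_ns'[OF c])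
  finally show ?thesis .
qed

lemma sum_cnj_mc_ns'_right:
  assumes d: "d \<in> B'"
  shows "(\<Sum>k\<in>B'. \<Sum>l\<in>B'. F k l * cnj (mc ns' d k l))
      = (\<Sum>x\<in>B. \<Sum>y\<in>B. F (lift (level d) x) (lift (level d) y) * cnj (mc ns (base d) x y))"
proof -
  have a: "level d \<le> n" using d by (rule level_le)
  have "(\<Sum>k\<in>B'. \<Sum>l\<in>B'. F k l * cnj (mc ns' d k l))
      = (\<Sum>x\<in>B. \<Sum>l\<in>B'. F (lift (level d) x) l * cnj (mc ns' d (lift (level d) x) l))"
    by (rule sum_B'_one_level[OF a]) (simp add: mc_ns'[OF d])
  also have "\<dots> = (\<Sum>x\<in>B. \<Sum>y\<in>B. F (lift (level d) x) (lift (level d) y) * cnj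
      (mc ns' d (lift (level d) x) (lift (level d) y)))"
    by (intro sum.cong refl sum_B'_one_level[OF a]) (simp add: mc_ns'[OF d])
  also have "\<dots> = (\<Sum>x\<in>B. \<Sum>y\<in>B. F (lift (level d) x) (lift (level d) y) * cnj
      (mc ns (base d) x y))"
    by (intro sum.cong refl) (simp add: mc_ns'[OF d])
  finally show ?thesis .
qed

lemma qgraph_tower_block:
  assumes "a \<le> n" "b \<le> n"
  shows "qgraph ns (tower_block a b)"
proof -
  have sch: "schur ns (tower_block a b) (tower_block a b) c d
      = tower_block a b c d \<and> barm (tower_block a b) c d = tower_block a b c d"
    if c: "c \<in> B" and d: "d \<in> B" for c d
  proof (cases "a = b \<and> 1 \<le> a")
    case True
    then have "tower_block a b = As a" using True by (auto simp: tower_block_def intro!: ext)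
    then show ?thesis using qgraph_As[of a] True assms c d by (auto simp: qgraph_def)
  next
    case F: False
    show ?thesis
    proof (cases "a = Suc b")
      case True
      then have "tower_block a b = idm" using F by (auto simp: tower_block_def intro!: ext)
      moreover have "barm idm c d = idm c d"
        by (auto simp: barm_def idm_def) (metis itr_itr)
      ultimately show ?thesis using schur_idm[OF qset_ns c d] by simp
    next
      case False
      then have "tower_block a b = (\<lambda>x y. 0)" using F by (auto simp: tower_block_def intro!: ext)
      then show ?thesis by (simp add: schur_def barm_def)
    qed
  qed
  then show ?thesis by (simp add: qgraph_def)
qed

lemma qgraph_A': "qgraph ns' A'"
  unfolding qgraph_def
proof (intro ballI conjI)
  fix c d assume c: "c \<in> B'" and d: "d \<in> B'"
  let ?M = "tower_block (level c) (level d)"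
  have g: "qgraph ns ?M" using c d by (intro qgraph_tower_block level_le)
  have rc: "base c \<in> B" and rd: "base d \<in> B" using c d by (auto simp: base_in_B)
  have "schur ns' A' A' c d = (\<Sum>k\<in>B'. \<Sum>l\<in>B'. mc ns' c k l *
          (\<Sum>k'\<in>B'. \<Sum>l'\<in>B'. (A' k k' * A' l l') * cnj (mc ns' d k' l')))"
    unfolding schur_def by (simp add: sum_distrib_left mult_ac)
  also have "\<dots> = (\<Sum>x\<in>B. \<Sum>y\<in>B. mc ns (base c) x y *
          (\<Sum>x'\<in>B. \<Sum>y'\<in>B. (?M x x' * ?M y y') * cnj (mc ns (base d) x' y')))"
    by (simp add: sum_mc_ns'_left[OF c] sum_cnj_mc_ns'_right[OF d] A'_def)
  also have "\<dots> = schur ns ?M ?M (base c) (base d)"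
    unfolding schur_def by (simp add: sum_distrib_left mult_ac)
  also have "\<dots> = A' c d" using g rc rd by (simp add: qgraph_def A'_def)
  finally show "schur ns' A' A' c d = A' c d" .
  show "barm A' c d = A' c d"
    using g rc rd by (simp add: qgraph_def A'_def barm_def)
qed

end

section \<open>Invariant vectors of the fundamental representation\<close>

lemma sum_reorder_outer:
  fixes u :: "'a \<Rightarrow> 'b::comm_ring"
  shows "(\<Sum>d\<in>S. (\<Sum>k\<in>T. \<Sum>l\<in>T. m d k l * f k * g l) * u d) =
         (\<Sum>k\<in>T. \<Sum>l\<in>T. f k * g l * (\<Sum>d\<in>S. m d k l * u d))"
proof -
  have "(\<Sum>d\<in>S. (\<Sum>k\<in>T. \<Sum>l\<in>T. m d k l * f k * g l) * u d) =
        (\<Sum>d\<in>S. \<Sum>k\<in>T. \<Sum>l\<in>T. f k * g l * (m d k l * u d))"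
    by (simp add: sum_distrib_left sum_distrib_right mult_ac)
  also have "\<dots> = (\<Sum>k\<in>T. \<Sum>d\<in>S. \<Sum>l\<in>T. f k * g l * (m d k l * u d))"
    by (rule sum.swap)
  also have "\<dots> = (\<Sum>k\<in>T. \<Sum>l\<in>T. \<Sum>d\<in>S. f k * g l * (m d k l * u d))"
    by (rule sum.cong[OF refl], rule sum.swap)
  finally show ?thesis by (simp add: sum_distrib_left)
qed

lemma sum_swap_pairs:
  "(\<Sum>k\<in>S. \<Sum>l\<in>S. \<Sum>a\<in>S. \<Sum>b\<in>S. F k l a b)
      = (\<Sum>a\<in>S. \<Sum>b\<in>S. \<Sum>k\<in>S. \<Sum>l\<in>S. F k l a b)"
proof -
  have "(\<Sum>k\<in>S. \<Sum>l\<in>S. \<Sum>a\<in>S. \<Sum>b\<in>S. F k l a b)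
      = (\<Sum>(k,l,a,b)\<in>S\<times>S\<times>S\<times>S. F k l a b)"
    by (simp add: sum.cartesian_product split_def)
  also have "\<dots> = (\<Sum>(a,b,k,l)\<in>S\<times>S\<times>S\<times>S. F k l a b)"
    by (rule sum.reindex_bij_witness[where i = "\<lambda>(a,b,k,l). (k,l,a,b)" and j = "\<lambda>(k,l,a,b).
        (a,b,k,l)"]) auto
  also have "\<dots> = (\<Sum>a\<in>S. \<Sum>b\<in>S. \<Sum>k\<in>S. \<Sum>l\<in>S. F k l a b)"
    by (simp add: sum.cartesian_product split_def)
  finally show ?thesis .
qed

lemma sum_reorder_inner:
  fixes P :: "'a \<Rightarrow> 'a \<Rightarrow> 'a \<Rightarrow> 'a \<Rightarrow> 'b::comm_ring"
  shows "(\<Sum>k\<in>S. \<Sum>l\<in>S. f k * g l * (\<Sum>a\<in>S. \<Sum>b\<in>S. m a b * P a k b l)) =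
         (\<Sum>a\<in>S. \<Sum>b\<in>S. m a b * (\<Sum>k\<in>S. \<Sum>l\<in>S. f k * g l * P a k b l))"
proof -
  have "(\<Sum>k\<in>S. \<Sum>l\<in>S. f k * g l * (\<Sum>a\<in>S. \<Sum>b\<in>S. m a b * P a k b l)) =
        (\<Sum>k\<in>S. \<Sum>l\<in>S. \<Sum>a\<in>S. \<Sum>b\<in>S. m a b * (f k * g l * P a k b l))"
    by (simp add: sum_distrib_left mult_ac)
  also have "\<dots> = (\<Sum>a\<in>S. \<Sum>b\<in>S. \<Sum>k\<in>S. \<Sum>l\<in>S. m a b * (f k * g l * P a k b l))"
    by (rule sum_swap_pairs)
  finally show ?thesis by (simp add: sum_distrib_left)
qed

context tower
begin

abbreviation R' :: "letter ncp set" where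
  "R' \<equiv> qut_rel ns' {A'}"

abbreviation I' :: "letter ncp set" where
  "I' \<equiv> gideal (lett B') (R' \<union> pstar flipL ` R')"

lemma starideal_R': "starideal flipL (lett B') R' = I'"
  by (simp add: starideal_def)

lemma R'_in_I': "r \<in> R' \<Longrightarrow> r \<in> I'"
  by (rule gideal_generator) simp

lemma cong_mod_R': "pdiff p q \<in> R' \<Longrightarrow> cong_mod I' p q"
  by (simp add: cong_mod_def R'_in_I')

lemma R'_unit:
  "i \<in> B' \<Longrightarrow> pdiff (psum (\<lambda>j. psmult (eta ns' j) (ug i j)) B') (pconst (eta ns' i)) \<in> R'"
  unfolding qut_rel_def rel_qset_def by (rule UnI1, rule UnI2, blast)

lemma R'_mult:
  "c \<in> B' \<Longrightarrow> k \<in> B' \<Longrightarrow> l \<in> B' \<Longrightarrow>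
   pdiff (psum (\<lambda>a. psum (\<lambda>b. psmult (mc ns' c a b) (pmul (ug a k) (ug b l))) B') B')
         (psum (\<lambda>d. psmult (mc ns' d k l) (ug c d)) B') \<in> R'"
  unfolding qut_rel_def rel_qset_def by (rule UnI1, rule UnI1, rule UnI2, blast)

lemma R'_graph:
  "i \<in> B' \<Longrightarrow> j \<in> B' \<Longrightarrow>
   pdiff (psum (\<lambda>k. psmult (A' k j) (ug i k)) B') (psum (\<lambda>k. psmult (A' i k) (ug k j)) B') \<in> R'"
  unfolding qut_rel_def rel_graph_def by (rule UnI2, blast)

text \<open>\<open>Uvec f i\<close> is the \<open>i\<close>-th entry of \<open>U f\<close>; \<open>f\<close> is invariant if \<open>U f = f\<close>
  holds in \<open>Pol(Qut(X', A'))\<close>.\<close>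

definition Uvec :: "(idx \<Rightarrow> complex) \<Rightarrow> idx \<Rightarrow> letter ncp" where
  "Uvec f i = psum (\<lambda>j. psmult (f j) (ug i j)) B'"

definition invariant :: "(idx \<Rightarrow> complex) \<Rightarrow> bool" where
  "invariant f \<longleftrightarrow> (\<forall>i\<in>B'. cong_mod I' (Uvec f i) (pconst (f i)))"

lemma invariantD: "invariant f \<Longrightarrow> i \<in> B' \<Longrightarrow> cong_mod I' (Uvec f i) (pconst (f i))"
  by (simp add: invariant_def)

lemma Uvec_ncpoly: "i \<in> B' \<Longrightarrow> Uvec f i \<in> ncpoly (lett B')"
  unfolding Uvec_def by (intro ncpoly_psum ncpoly_psmult ug_ncpoly) auto

lemma invariant_eta: "invariant (eta ns')"
  unfolding invariant_def Uvec_def using R'_unit by (simp add: cong_mod_R')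

lemma invariant_cong: "invariant f \<Longrightarrow> (\<And>j. j \<in> B' \<Longrightarrow> f j = g j)
    \<Longrightarrow> invariant g"
proof -
  assume "invariant f" and fg: "\<And>j. j \<in> B' \<Longrightarrow> f j = g j"
  moreover have "Uvec f i = Uvec g i" for i
    using fg unfolding Uvec_def by (intro psum_cong) simp
  ultimately show ?thesis unfolding invariant_def by simp
qed

lemma invariant_lincomb:
  assumes f: "invariant f" and g: "invariant g"
  shows "invariant (\<lambda>j. \<alpha> * f j + \<beta> * g j)"
  unfolding invariant_def
proof
  fix i assume i: "i \<in> B'"
  have "Uvec (\<lambda>j. \<alpha> * f j + \<beta> * g j) i
      = padd (psmult \<alpha> (Uvec f i)) (psmult \<beta> (Uvec g i))"
    unfolding Uvec_def by (rule ext) (simp add: ncp_app sum_distrib_left sum.distrib algebra_simps)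
  also have "cong_mod I' \<dots> (padd (psmult \<alpha> (pconst (f i))) (psmult \<beta> (pconst (g i))))"
    using f g i by (intro cong_mod_padd cong_mod_psmult invariantD)
  also have "padd (psmult \<alpha> (pconst (f i))) (psmult \<beta> (pconst (g i)))
      = pconst (\<alpha> * f i + \<beta> * g i)"
    by (rule ext) (simp add: ncp_app pconst_def)
  finally show "cong_mod I' (Uvec (\<lambda>j. \<alpha> * f j + \<beta> * g j) i)
      (pconst (\<alpha> * f i + \<beta> * g i))" .
qed

lemma invariant_A':
  assumes f: "invariant f"
  shows "invariant (\<lambda>i. \<Sum>e\<in>B'. A' i e * f e)"
  unfolding invariant_def
proof
  fix i assume i: "i \<in> B'"
  have "Uvec (\<lambda>i. \<Sum>e\<in>B'. A' i e * f e) i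
      = psum (\<lambda>e. psmult (f e) (psum (\<lambda>j. psmult (A' j e) (ug i j)) B')) B'"
    unfolding Uvec_def by (rule ext) (simp add: ncp_app sum_distrib_left sum_distrib_right mult_ac, rule sum.swap)
  also have "cong_mod I' \<dots> (psum (\<lambda>e. psmult (f e) (psum (\<lambda>k. psmult (A' i k) (ug k e)) B')) B')"
    using i R'_graph by (intro cong_mod_psum cong_mod_psmult cong_mod_R') auto
  also have "psum (\<lambda>e. psmult (f e) (psum (\<lambda>k. psmult (A' i k) (ug k e)) B')) B'
      = psum (\<lambda>k. psmult (A' i k) (Uvec f k)) B'"
    unfolding Uvec_def by (rule ext) (simp add: ncp_app sum_distrib_left mult_ac, rule sum.swap)
  also have "cong_mod I' \<dots> (psum (\<lambda>k. psmult (A' i k) (pconst (f k))) B')"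
    using f by (intro cong_mod_psum cong_mod_psmult invariantD) auto
  also have "psum (\<lambda>k. psmult (A' i k) (pconst (f k))) B' = pconst (\<Sum>e\<in>B'. A' i e * f e)"
    by (rule ext) (simp add: ncp_app pconst_def)
  finally show "cong_mod I' (Uvec (\<lambda>i. \<Sum>e\<in>B'. A' i e * f e) i)
      (pconst (\<Sum>e\<in>B'. A' i e * f e))" .
qed

text \<open>The relation \<open>U m = m (U \<otimes> U)\<close>, applied to \<open>f \<otimes> g\<close>.\<close>

lemma Uvec_mult:
  assumes c: "c \<in> B'"
  shows "cong_mod I' (Uvec (\<lambda>d. \<Sum>k\<in>B'. \<Sum>l\<in>B'. mc ns' d k l * f k * g l) c)
           (psum (\<lambda>a. psum (\<lambda>b. psmult (mc ns' c a b) (pmul (Uvec f a) (Uvec g b))) B') B')"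
proof -
  let ?P = "\<lambda>a k b l. pmul (ug a k) (ug b l)"
  have "Uvec (\<lambda>d. \<Sum>k\<in>B'. \<Sum>l\<in>B'. mc ns' d k l * f k * g l) c
     = psum (\<lambda>k. psum (\<lambda>l. psmult (f k * g l)
         (psum (\<lambda>d. psmult (mc ns' d k l) (ug c d)) B')) B') B'"
    unfolding Uvec_def by (rule ext) (unfold ncp_app, rule sum_reorder_outer)
  also have "cong_mod I' \<dots> (psum (\<lambda>k. psum (\<lambda>l. psmult (f k * g l)
        (psum (\<lambda>a. psum (\<lambda>b. psmult (mc ns' c a b) (?P a k b l)) B') B')) B') B')"
  proof (rule cong_mod_psum[OF finite_qbasis], rule cong_mod_psum[OF finite_qbasis], rule cong_mod_psmult)
    fix k l assume "k \<in> B'" "l \<in> B'"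
    then show "cong_mod I' (psum (\<lambda>d. psmult (mc ns' d k l) (ug c d)) B')
        (psum (\<lambda>a. psum (\<lambda>b. psmult (mc ns' c a b) (?P a k b l)) B') B')"
      using c by (intro cong_mod_sym[OF cong_mod_R'] R'_mult)
  qed
  also have "\<dots> = psum (\<lambda>a. psum (\<lambda>b. psmult (mc ns' c a b) (pmul (Uvec f a) (Uvec g b))) B') B'"
  proof -
    have "pmul (Uvec f a) (Uvec g b) = psum (\<lambda>k. psum (\<lambda>l. psmult (f k * g l) (?P a k b l)) B')
        B'" for a b
      unfolding Uvec_def
      by (simp only: pmul_psum_left, simp only: pmul_psum_right pmul_psmult_left pmul_psmult_right)
         (rule ext, simp add: ncp_app sum_distrib_left mult_ac)
    then show ?thesis
      by (simp only:) (rule ext, unfold ncp_app, rule sum_reorder_inner)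
  qed
  finally show ?thesis .
qed

lemma invariant_mult:
  assumes f: "invariant f" and g: "invariant g"
  shows "invariant (\<lambda>c. \<Sum>k\<in>B'. \<Sum>l\<in>B'. mc ns' c k l * f k * g l)"
  unfolding invariant_def
proof
  fix c assume c: "c \<in> B'"
  have "cong_mod I' (Uvec (\<lambda>d. \<Sum>k\<in>B'. \<Sum>l\<in>B'. mc ns' d k l * f k * g l) c)
           (psum (\<lambda>a. psum (\<lambda>b. psmult (mc ns' c a b) (pmul (Uvec f a) (Uvec g b))) B') B')"
    using c by (rule Uvec_mult)
  also have "cong_mod I' \<dots> (psum (\<lambda>a. psum
      (\<lambda>b. psmult (mc ns' c a b) (pmul (pconst (f a)) (Uvec g b))) B') B')"
    using f by (intro cong_mod_psum cong_mod_psmult cong_mod_pmul_right invariantD Uvec_ncpoly) auto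
  also have "\<dots> = psum (\<lambda>a. psum (\<lambda>b. psmult (mc ns' c a b * f a) (Uvec g b)) B') B'"
    by (simp add: pmul_pconst_left) (rule ext, simp add: ncp_app mult.assoc)
  also have "cong_mod I' \<dots> (psum (\<lambda>a. psum
      (\<lambda>b. psmult (mc ns' c a b * f a) (pconst (g b))) B') B')"
    using g by (intro cong_mod_psum cong_mod_psmult invariantD) auto
  also have "\<dots> = pconst (\<Sum>k\<in>B'. \<Sum>l\<in>B'. mc ns' c k l * f k * g l)"
    by (rule ext) (simp add: ncp_app pconst_def)
  finally show "cong_mod I' (Uvec (\<lambda>d. \<Sum>k\<in>B'. \<Sum>l\<in>B'. mc ns' d k l * f k * g l) c)
      (pconst (\<Sum>k\<in>B'. \<Sum>l\<in>B'. mc ns' c k l * f k * g l))" .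
qed

end

section \<open>Separating the levels\<close>

lemma psum_delta_right:
  assumes "finite S" "l \<in> S"
  shows "psum (\<lambda>d. psmult (c d * delta d l) (F d)) S = psmult (c l) (F l)"
proof (rule ext)
  fix w
  show "psum (\<lambda>d. psmult (c d * delta d l) (F d)) S w = psmult (c l) (F l) w"
    using assms by (simp add: ncp_app, subst sum.remove[of S l])
        (auto simp: delta_def split: if_splits intro!: sum.neutral)
qed

lemma psum_delta_left:
  assumes "finite S" "l \<in> S"
  shows "psum (\<lambda>d. psmult (c * delta l d) (F d)) S = psmult c (F l)"
proof (rule ext)
  fix w
  show "psum (\<lambda>d. psmult (c * delta l d) (F d)) S w = psmult c (F l) w"
    using assms by (simp add: ncp_app, subst sum.remove[of S l])
        (auto simp: delta_def split: if_splits intro!: sum.neutral)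
qed

context tower
begin

definition level_vec :: "(nat \<Rightarrow> complex) \<Rightarrow> idx \<Rightarrow> complex" where
  "level_vec \<alpha> k = \<alpha> (level k) * eta ns' k"

definition level_step :: "(nat \<Rightarrow> complex) \<Rightarrow> nat \<Rightarrow> complex" where
  "level_step \<alpha> a = (if a = 0 then 0 else complex_of_real (dg a) * \<alpha> a + \<alpha> (a - 1))"

lemma dg_nonneg: "a \<in> {1..n} \<Longrightarrow> 0 \<le> dg a"
  using dregular_nonneg[OF qset_ns qgraph_As dregular_As] by blast

lemma mc_level_vec_left:
  assumes c: "c \<in> B'" and b: "b \<in> B'"
  shows "(\<Sum>a\<in>B'. mc ns' c a b * level_vec \<alpha> a) = \<alpha> (level c) * delta c b"
proof -
  have "(\<Sum>a\<in>B'. mc ns' c a b * level_vec \<alpha> a) =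
      (\<Sum>x\<in>B. mc ns' c (lift (level c) x) b * level_vec \<alpha> (lift (level c) x))"
    using c by (intro sum_B'_one_level level_le) (auto simp: mc_ns')
  also have "\<dots> = (if level b = level c then \<alpha> (level c) *
      (\<Sum>x\<in>B. mc ns (base c) x (base b) * eta ns x) else 0)"
    using c by (auto simp: mc_ns' level_vec_def eta_ns' lift_in_B' level_le sum_distrib_left mult_ac
        intro!: sum.cong)
  also have "\<dots> = \<alpha> (level c) * delta c b"
  proof (cases "level b = level c")
    case True
    then show ?thesis using mc_eta_left[OF qset_ns base_in_B[OF c] base_in_B[OF b]] by (simp add: delta_base)
  next
    case False
    then have "c \<noteq> b" by auto
    with False show ?thesis by (simp add: delta_def)
  qed
  finally show ?thesis .
qed

lemma tower_block_eta:
  assumes a: "a \<le> n" and y: "y \<in> B"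
  shows "(\<Sum>x\<in>B. tower_block a b y x * eta ns x) =
    ((if a = b \<and> 1 \<le> a then complex_of_real (dg a) else 0) + (if a = Suc b then 1 else 0)) * eta ns y"
proof -
  have As: "(\<Sum>x\<in>B. As a y x * eta ns x) = complex_of_real (dg a) * eta ns y" if "a = b \<and> 1 \<le> a"
    using that dregular_As[of a] a y by (simp add: dregular_def)
  have idm: "(\<Sum>x\<in>B. idm y x * eta ns x) = eta ns y"
    using y by (simp add: idm_def if_distrib[where f = "\<lambda>x. x * _"] cong: if_cong)
  show ?thesis
  proof (cases "a = b \<and> 1 \<le> a")
    case True
    then have "b = a" "1 \<le> a" by auto
    then show ?thesis using As[OF True] by (simp add: tower_block_eq)
  next
    case False
    then have "tower_block a b = (if a = Suc b then idm else (\<lambda>_ _. 0))"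
      and "(if a = b \<and> 1 \<le> a then complex_of_real (dg a) else 0) = 0"
      by (simp_all only: tower_block_eq if_not_P[OF False] if_False)
    then show ?thesis by (cases "a = Suc b") (simp_all add: idm)
  qed
qed

lemma sum_weights_level_step:
  assumes "a \<le> n"
  shows "(\<Sum>b\<le>n. \<alpha> b * ((if a = b \<and> 1 \<le> a then complex_of_real (dg a) else 0) +
      (if a = Suc b then 1 else 0)))
    = level_step \<alpha> a"
proof (cases a)
  case (Suc a')
  then have "a' \<le> n" "Suc a' \<le> n" using assms by simp_all
  then show ?thesis
    by (simp add: Suc level_step_def distrib_left sum.distrib mult.commute
        if_distrib[where f = "\<lambda>x. _ * x"] cong: if_cong)
qed (simp add: level_step_def)

lemma A'_level_vec:
  assumes i: "i \<in> B'"
  shows "(\<Sum>e\<in>B'. A' i e * level_vec \<alpha> e) = level_vec (level_step \<alpha>) i"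
proof -
  let ?a = "level i" and ?y = "base i"
  have a: "?a \<le> n" and y: "?y \<in> B" using i by (auto simp: level_le base_in_B)
  have "(\<Sum>e\<in>B'. A' i e * level_vec \<alpha> e)
      = (\<Sum>b\<le>n. \<alpha> b * (\<Sum>x\<in>B. tower_block ?a b ?y x * eta ns x))"
    unfolding sum_B' by (intro sum.cong refl) (simp add: A'_def level_vec_def eta_ns' lift_in_B'
        sum_distrib_left mult_ac)
  also have "\<dots> = (\<Sum>b\<le>n. \<alpha> b * ((if ?a = b \<and> 1 \<le> ?a then complex_of_real (dg ?a) else 0)
      + (if ?a = Suc b then 1 else 0))) * eta ns ?y"
    by (simp only: tower_block_eta[OF a y]) (simp add: sum_distrib_left sum_distrib_right mult_ac)
  also have "\<dots> = level_vec (level_step \<alpha>) i"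
    by (simp only: sum_weights_level_step[OF a]) (simp add: level_vec_def eta_ns' i)
  finally show ?thesis .
qed

lemma mult_level_vec:
  assumes c: "c \<in> B'"
  shows "(\<Sum>k\<in>B'. \<Sum>l\<in>B'. mc ns' c k l * level_vec \<alpha> k * level_vec \<beta> l)
      = level_vec (\<lambda>a. \<alpha> a * \<beta> a) c"
proof -
  have a: "level c \<le> n" and y: "base c \<in> B" using c by (auto simp: level_le base_in_B)
  have "(\<Sum>k\<in>B'. \<Sum>l\<in>B'. mc ns' c k l * level_vec \<alpha> k * level_vec \<beta> l)
      = (\<Sum>x\<in>B. \<Sum>y\<in>B. mc ns (base c) x y *
          (level_vec \<alpha> (lift (level c) x) * level_vec \<beta> (lift (level c) y)))"
    using sum_mc_ns'_left[OF c] by (simp add: mult.assoc)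
  also have "\<dots> = (\<alpha> (level c) * \<beta> (level c)) *
      (\<Sum>x\<in>B. \<Sum>y\<in>B. mc ns (base c) x y * eta ns x * eta ns y)"
    using a by (simp add: level_vec_def eta_ns' lift_in_B' sum_distrib_left mult_ac)
  also have "\<dots> = level_vec (\<lambda>a. \<alpha> a * \<beta> a) c"
    using c by (simp add: mc_eta_eta[OF qset_ns y] level_vec_def eta_ns')
  finally show ?thesis .
qed

lemma invariant_level_vec_cong:
  "invariant (level_vec \<alpha>) \<Longrightarrow>
      (\<And>a. a \<le> n \<Longrightarrow> \<alpha> a = \<beta> a) \<Longrightarrow> invariant (level_vec \<beta>)"
  by (erule invariant_cong) (simp add: level_vec_def level_le)

lemma invariant_level_vec_1: "invariant (level_vec (\<lambda>_. 1))"
  by (rule invariant_cong[OF invariant_eta]) (simp add: level_vec_def)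

lemma invariant_level_vec_lincomb:
  "invariant (level_vec \<alpha>) \<Longrightarrow> invariant (level_vec \<beta>) \<Longrightarrow> invariant
      (level_vec (\<lambda>a. x * \<alpha> a + y * \<beta> a))"
  by (rule invariant_cong[OF invariant_lincomb[of "level_vec \<alpha>" "level_vec \<beta>" x y]])
     (auto simp: level_vec_def algebra_simps)

lemma invariant_level_vec_mult:
  "invariant (level_vec \<alpha>) \<Longrightarrow> invariant (level_vec \<beta>) \<Longrightarrow> invariant
      (level_vec (\<lambda>a. \<alpha> a * \<beta> a))"
  by (rule invariant_cong[OF invariant_mult[of "level_vec \<alpha>" "level_vec \<beta>"]]) (auto simp: mult_level_vec)

lemma invariant_level_vec_step:
  "invariant (level_vec \<alpha>) \<Longrightarrow> invariant (level_vec (level_step \<alpha>))"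
  by (rule invariant_cong[OF invariant_A']) (auto simp: A'_level_vec)

lemma invariant_level_vec_prod:
  "invariant (level_vec (\<lambda>b. \<Prod>a\<in>{1..m}. level_step (\<lambda>_. 1) b - (complex_of_real (dg a) + 1)))"
proof (induction m)
  case 0
  then show ?case using invariant_level_vec_1 by simp
next
  case (Suc m)
  have "invariant (level_vec (\<lambda>b. 1 * level_step (\<lambda>_. 1) b +
      (- (complex_of_real (dg (Suc m)) + 1)) * 1))"
    by (rule invariant_level_vec_lincomb[OF invariant_level_vec_step[OF invariant_level_vec_1] invariant_level_vec_1])
  from invariant_level_vec_mult[OF Suc.IH this] show ?case
    by (rule invariant_level_vec_cong) (simp add: prod.nat_ivl_Suc')
qed

text \<open>Level 0 is the only level on which \<open>A' \<eta>\<close> vanishes, since \<open>d\<^sub>a + 1 > 0\<close>;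
  a Lagrange polynomial in \<open>A' \<eta>\<close> therefore isolates it.\<close>

lemma invariant_level_vec_0: "invariant (level_vec (\<lambda>b. if b = 0 then 1 else 0))"
proof -
  let ?p = "\<lambda>b. \<Prod>a\<in>{1..n}. level_step (\<lambda>_. 1) b - (complex_of_real (dg a) + 1)"
  have "level_step (\<lambda>_. 1) 0 - (complex_of_real (dg a) + 1) \<noteq> 0" if "a \<in> {1..n}" for a
    using dg_nonneg[OF that] by (simp add: level_step_def complex_eq_iff)
  then have p0: "?p 0 \<noteq> 0" by (simp add: prod_zero_iff)
  have "invariant (level_vec (\<lambda>b. (1 / ?p 0) * ?p b + 0 * 1))"
    by (rule invariant_level_vec_lincomb[OF invariant_level_vec_prod invariant_level_vec_1])
  then show ?thesis
  proof (rule invariant_level_vec_cong)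
    fix b assume b: "b \<le> n"
    show "(1 / ?p 0) * ?p b + 0 * 1 = (if b = 0 then 1 else 0)"
    proof (cases "b = 0")
      case False
      then have "b \<in> {1..n}" using b by auto
      moreover have "level_step (\<lambda>_. 1) b - (complex_of_real (dg b) + 1) = 0"
        using False by (simp add: level_step_def)
      ultimately have "?p b = 0" by (intro prod_zero) auto
      then show ?thesis using False by simp
    qed (use p0 in simp)
  qed
qed

lemma invariant_level_indicator: "invariant (level_vec (\<lambda>b. if b = a then 1 else 0))"
proof (induction a)
  case 0
  then show ?case using invariant_level_vec_0 by simp
next
  case (Suc a)
  let ?E = "\<lambda>b. if b = a then (1::complex) else 0"
  have "invariant (level_vec (\<lambda>b. 1 * level_step ?E b +
      (- (if a = 0 then 0 else complex_of_real (dg a))) * ?E b))"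
    by (rule invariant_level_vec_lincomb[OF invariant_level_vec_step[OF Suc.IH] Suc.IH])
  then show ?case
    by (rule invariant_level_vec_cong) (auto simp: level_step_def)
qed

lemma Uvec_delta: "l \<in> B' \<Longrightarrow> Uvec (\<lambda>x. delta x l) b = ug b l"
  unfolding Uvec_def using psum_delta_right[of B' l "\<lambda>_. 1" "ug b"] by simp

text \<open>The relation \<open>U m = m (U \<otimes> U)\<close> applied to \<open>level_vec \<alpha> \<otimes> e\<^sub>l\<close>.\<close>

lemma level_vec_separates:
  assumes f: "invariant (level_vec \<alpha>)" and c: "c \<in> B'" and l: "l \<in> B'"
  shows "psmult (\<alpha> (level c) - \<alpha> (level l)) (ug c l) \<in> I'"
proof -
  let ?f = "level_vec \<alpha>" and ?g = "\<lambda>x. delta x l"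
  have vec: "(\<Sum>k\<in>B'. \<Sum>l'\<in>B'. mc ns' d k l' * ?f k * ?g l') = \<alpha> (level d) * delta d l"
    if d: "d \<in> B'" for d
  proof -
    have "(\<Sum>k\<in>B'. \<Sum>l'\<in>B'. mc ns' d k l' * ?f k * ?g l') = (\<Sum>k\<in>B'. mc ns' d k l * ?f k)"
      using l by (simp add: delta_def if_distrib[where f = "\<lambda>x. _ * x"] cong: if_cong)
    also have "\<dots> = \<alpha> (level d) * delta d l"
      using mc_level_vec_left[OF d l] .
    finally show ?thesis .
  qed
  have "psmult (\<alpha> (level l)) (ug c l) = psum (\<lambda>d. psmult (\<alpha> (level d) * delta d l) (ug c d)) B'"
    using l by (simp add: psum_delta_right)
  also have "\<dots> = Uvec (\<lambda>d. \<Sum>k\<in>B'. \<Sum>l'\<in>B'. mc ns' d k l' * ?f k * ?g l') c"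
    unfolding Uvec_def by (rule psum_cong) (simp add: vec)
  also have "cong_mod I' \<dots> (psum (\<lambda>a. psum
      (\<lambda>b. psmult (mc ns' c a b) (pmul (Uvec ?f a) (ug b l))) B') B')"
    using Uvec_mult[OF c, of ?f ?g] l by (simp add: Uvec_delta)
  also have "cong_mod I' \<dots> (psum (\<lambda>a. psum
      (\<lambda>b. psmult (mc ns' c a b) (pmul (pconst (?f a)) (ug b l))) B') B')"
    using f l by (intro cong_mod_psum cong_mod_psmult cong_mod_pmul_right invariantD ug_ncpoly) auto
  also have "\<dots> = psum (\<lambda>b. psmult (\<Sum>a\<in>B'. mc ns' c a b * ?f a) (ug b l)) B'"
    by (simp add: pmul_pconst_left) (rule ext, simp add: ncp_app sum_distrib_right, subst sum.swap, simp add: mult_ac)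
  also have "\<dots> = psmult (\<alpha> (level c)) (ug c l)"
    using c by (simp add: mc_level_vec_left psum_delta_left cong: psum_cong)
  finally have "cong_mod I' (psmult (\<alpha> (level l)) (ug c l)) (psmult (\<alpha> (level c)) (ug c l))" .
  then have "psmult (-1) (pdiff (psmult (\<alpha> (level l)) (ug c l)) (psmult (\<alpha> (level c)) (ug c l))) \<in> I'"
    unfolding cong_mod_def by (rule gideal.smult)
  moreover have "psmult (-1) (pdiff (psmult (\<alpha> (level l)) (ug c l)) (psmult (\<alpha> (level c)) (ug c l)))
      = psmult (\<alpha> (level c) - \<alpha> (level l)) (ug c l)"
    by (rule ext) (simp add: ncp_app algebra_simps)
  ultimately show ?thesis by simp
qed

lemma ug_cross_level: "c \<in> B' \<Longrightarrow> l \<in> B' \<Longrightarrow> level c \<noteq> level l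
    \<Longrightarrow> ug c l \<in> I'"
  using level_vec_separates[OF invariant_level_indicator[of "level c"], of c l] by simp

end

section \<open>Every level carries the same copy of \<open>U\<close>\<close>

lemma psum_idm_left: "finite S \<Longrightarrow> y \<in> S \<Longrightarrow> psum
    (\<lambda>z. psmult (idm z y) (F z)) S = F y"
  by (rule ext) (simp add: ncp_app idm_def if_distrib[where f = "\<lambda>x. x * _"] cong: if_cong)

lemma psum_idm_right: "finite S \<Longrightarrow> x \<in> S \<Longrightarrow> psum
    (\<lambda>z. psmult (idm x z) (F z)) S = F x"
  by (rule ext) (simp add: ncp_app idm_def if_distrib[where f = "\<lambda>x. x * _"] cong: if_cong)

context tower
begin

lemma row_sum_one_level:
  assumes i: "i \<in> B'"
  shows "cong_mod I' (psum (\<lambda>k. psmult (C k) (ug i k)) B')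
           (psum (\<lambda>z. psmult (C (lift (level i) z)) (ug i (lift (level i) z))) B)"
proof -
  have "cong_mod I' (psum (\<lambda>k. psmult (C k) (ug i k)) B')
      (psum (\<lambda>k. if level k = level i then psmult (C k) (ug i k) else pzero) B')"
  proof (rule cong_mod_psum[OF finite_qbasis])
    fix k assume k: "k \<in> B'"
    show "cong_mod I' (psmult (C k) (ug i k)) (if level k = level i then psmult (C k) (ug i k) else pzero)"
      using ug_cross_level[OF i k] by (simp add: cong_mod_refl cong_mod_pzero_iff gideal.smult)
  qed
  also have "psum (\<lambda>k. if level k = level i then psmult (C k) (ug i k) else pzero) B'
      = psum (\<lambda>z. psmult (C (lift (level i) z)) (ug i (lift (level i) z))) B"
    using i by (subst psum_B'_one_level[where a = "level i"]) (auto simp: level_le intro!: psum_cong)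
  finally show ?thesis .
qed

lemma col_sum_one_level:
  assumes j: "j \<in> B'"
  shows "cong_mod I' (psum (\<lambda>k. psmult (C k) (ug k j)) B')
           (psum (\<lambda>z. psmult (C (lift (level j) z)) (ug (lift (level j) z) j)) B)"
proof -
  have "cong_mod I' (psum (\<lambda>k. psmult (C k) (ug k j)) B')
      (psum (\<lambda>k. if level k = level j then psmult (C k) (ug k j) else pzero) B')"
  proof (rule cong_mod_psum[OF finite_qbasis])
    fix k assume k: "k \<in> B'"
    show "cong_mod I' (psmult (C k) (ug k j)) (if level k = level j then psmult (C k) (ug k j) else pzero)"
      using ug_cross_level[OF k j] by (simp add: cong_mod_refl cong_mod_pzero_iff gideal.smult)
  qed
  also have "psum (\<lambda>k. if level k = level j then psmult (C k) (ug k j) else pzero) B'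
      = psum (\<lambda>z. psmult (C (lift (level j) z)) (ug (lift (level j) z) j)) B"
    using j by (subst psum_B'_one_level[where a = "level j"]) (auto simp: level_le intro!: psum_cong)
  finally show ?thesis .
qed

lemma A'_lift: "x \<in> B \<Longrightarrow> y \<in> B \<Longrightarrow> A' (lift a x) (lift b y) = tower_block a b x y"
  by (simp add: A'_def)

text \<open>The identity block from level \<open>a\<close> to level \<open>a - 1\<close> in \<open>U A' = A' U\<close>.\<close>

lemma ug_lift_step:
  assumes a: "a \<in> {1..n}" and x: "x \<in> B" and y: "y \<in> B"
  shows "cong_mod I' (ug (lift a x) (lift a y)) (ug (lift (a - 1) x) (lift (a - 1) y))"
proof -
  let ?i = "lift a x" and ?j = "lift (a - 1) y"
  have i: "?i \<in> B'" and j: "?j \<in> B'" using a x y by (auto intro: lift_in_B')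
  have blk: "tower_block a (a - 1) = idm" "tower_block a (a - Suc 0) = idm"
    using a by (auto simp: tower_block_eq)
  have "psum (\<lambda>z. psmult (A' (lift a z) ?j) (ug ?i (lift a z))) B
      = psum (\<lambda>z. psmult (idm z y) (ug ?i (lift a z))) B"
    using y by (intro psum_cong) (simp add: A'_lift blk)
  then have "ug ?i (lift a y) = psum (\<lambda>z. psmult (A' (lift a z) ?j) (ug ?i (lift a z))) B"
    using y by (simp add: psum_idm_left)
  then have "cong_mod I' (psum (\<lambda>k. psmult (A' k ?j) (ug ?i k)) B') (ug ?i (lift a y))"
    using row_sum_one_level[OF i, of "\<lambda>k. A' k ?j"] x by simp
  moreover have "cong_mod I' (psum (\<lambda>k. psmult (A' k ?j) (ug ?i k)) B')
      (psum (\<lambda>k. psmult (A' ?i k) (ug k ?j)) B')"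
    using R'_graph[OF i j] by (rule cong_mod_R')
  moreover have "psum (\<lambda>z. psmult (A' ?i (lift (a - 1) z)) (ug (lift (a - 1) z) ?j)) B
      = psum (\<lambda>z. psmult (idm x z) (ug (lift (a - 1) z) ?j)) B"
    using x by (intro psum_cong) (simp add: A'_lift blk)
  then have "ug (lift (a - 1) x) ?j = psum (\<lambda>z. psmult (A' ?i (lift (a - 1) z)) (ug (lift (a - 1) z) ?j)) B"
    using x by (simp add: psum_idm_right)
  then have "cong_mod I' (psum (\<lambda>k. psmult (A' ?i k) (ug k ?j)) B') (ug (lift (a - 1) x) ?j)"
    using col_sum_one_level[OF j, of "\<lambda>k. A' ?i k"] y by simp
  ultimately show ?thesis by (meson cong_mod_sym cong_mod_trans)
qed

lemma ug_lift: "a \<le> n \<Longrightarrow> x \<in> B \<Longrightarrow> y \<in> B \<Longrightarrow> cong_mod I'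
    (ug (lift a x) (lift a y)) (ug x y)"
proof (induction a)
  case 0
  then show ?case by (simp add: cong_mod_refl)
next
  case (Suc a)
  then have "cong_mod I' (ug (lift (Suc a) x) (lift (Suc a) y)) (ug (lift a x) (lift a y))"
    using ug_lift_step[of "Suc a" x y] by simp
  also have "cong_mod I' (ug (lift a x) (lift a y)) (ug x y)" using Suc by simp
  finally show ?case .
qed

end

section \<open>The relations of \<open>\<Inter>\<^sub>a Qut(X, A\<^sub>a)\<close> hold in
    \<open>Pol(Qut(X', A'))\<close>\<close>

context tower
begin

abbreviation R :: "letter ncp set" where
  "R \<equiv> qut_rel ns (As ` {1..n})"

abbreviation I :: "letter ncp set" where
  "I \<equiv> starideal flipL (lett B) R"

lemma R'_unitary_left:
  "i \<in> B' \<Longrightarrow> j \<in> B' \<Longrightarrow> pdiff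
      (psum (\<lambda>k. pmul (ug i k) (ugs j k)) B') (pconst (delta i j)) \<in> R'"
  unfolding qut_rel_def rel_qset_def by (rule UnI1, rule UnI1, rule UnI1, rule UnI1, blast)

lemma R'_unitary_right:
  "i \<in> B' \<Longrightarrow> j \<in> B' \<Longrightarrow> pdiff
      (psum (\<lambda>k. pmul (ugs k i) (ug k j)) B') (pconst (delta i j)) \<in> R'"
  unfolding qut_rel_def rel_qset_def by (rule UnI1, rule UnI1, rule UnI1, rule UnI2, blast)

lemma level_ne_0: "k \<in> B' \<Longrightarrow> k \<notin> B \<Longrightarrow> level k \<noteq> 0"
  by (metis base_in_B lift_0 lift_level_base)

text \<open>The entries of \<open>U\<close> leaving level 0 vanish, so sums over \<open>B'\<close> may be cut down to
  level 0.\<close>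

lemma restrict_to_level_0:
  assumes f: "\<And>k. k \<in> B' - B \<Longrightarrow> f k \<in> I'" and r: "pdiff (psum f B') c \<in> I'"
  shows "pdiff (psum f B) c \<in> I'"
proof -
  have "psum f (B' - B) \<in> I'" using f by (intro gideal_psum) auto
  moreover have "pdiff (psum f B) c = pdiff (pdiff (psum f B') c) (psum f (B' - B))"
  proof (rule ext)
    fix w
    have "(\<Sum>k\<in>B'. f k w) = (\<Sum>k\<in>B. f k w) + (\<Sum>k\<in>B' - B. f k w)"
      by (simp add: sum.subset_diff[OF B_subset_B'] add.commute)
    then show "pdiff (psum f B) c w = pdiff (pdiff (psum f B') c) (psum f (B' - B)) w" by (simp add: ncp_app)
  qed
  ultimately show ?thesis using r by (simp add: gideal_pdiff)
qed

lemma unitary_left_in_I':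
  assumes i: "i \<in> B" and j: "j \<in> B"
  shows "pdiff (psum (\<lambda>k. pmul (ug i k) (ugs j k)) B) (pconst (delta i j)) \<in> I'"
proof (rule restrict_to_level_0)
  fix k assume k: "k \<in> B' - B"
  then have "ug i k \<in> I'" using i by (intro ug_cross_level) (auto simp: B_in_B' level_B level_ne_0)
  then show "pmul (ug i k) (ugs j k) \<in> I'" using k j by (intro gideal_pmul_right ugs_ncpoly) (auto simp: B_in_B')
qed (use i j in \<open>simp add: R'_in_I' R'_unitary_left B_in_B'\<close>)

lemma unitary_right_in_I':
  assumes i: "i \<in> B" and j: "j \<in> B"
  shows "pdiff (psum (\<lambda>k. pmul (ugs k i) (ug k j)) B) (pconst (delta i j)) \<in> I'"
proof (rule restrict_to_level_0)
  fix k assume k: "k \<in> B' - B"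
  then have "ug k j \<in> I'" using j by (intro ug_cross_level) (auto simp: B_in_B' level_B level_ne_0)
  then show "pmul (ugs k i) (ug k j) \<in> I'" using k i by (intro gideal_pmul_left ugs_ncpoly) (auto simp: B_in_B')
qed (use i j in \<open>simp add: R'_in_I' R'_unitary_right B_in_B'\<close>)

lemma unit_in_I':
  assumes i: "i \<in> B"
  shows "pdiff (psum (\<lambda>j. psmult (eta ns j) (ug i j)) B) (pconst (eta ns i)) \<in> I'"
proof -
  have "psum (\<lambda>j. psmult (eta ns j) (ug i j)) B = psum (\<lambda>j. psmult (eta ns' j) (ug i j)) B"
    by (intro psum_cong) (simp add: eta_ns' B_in_B' base_B)
  moreover have "pdiff (psum (\<lambda>j. psmult (eta ns' j) (ug i j)) B) (pconst (eta ns i)) \<in> I'"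
  proof (rule restrict_to_level_0)
    fix k assume k: "k \<in> B' - B"
    then have "ug i k \<in> I'" using i by (intro ug_cross_level) (auto simp: B_in_B' level_B level_ne_0)
    then show "psmult (eta ns' k) (ug i k) \<in> I'" by (rule gideal.smult)
  qed (use R'_unit[of i] i in \<open>simp add: R'_in_I' eta_ns' B_in_B' base_B\<close>)
  ultimately show ?thesis by simp
qed

lemma mc_ns'_level_0: "c \<in> B \<Longrightarrow> a \<in> B \<Longrightarrow> b \<in> B \<Longrightarrow> mc
    ns' c a b = mc ns c a b"
  by (simp add: mc_ns' B_in_B' level_B base_B)

lemma R'_mult_level_0:
  assumes c: "c \<in> B" and k: "k \<in> B" and l: "l \<in> B"
  shows "pdiff (psum (\<lambda>a. psum (\<lambda>b. psmult (mc ns' c a b) (pmul (ug a k) (ug b l))) B') B')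
           (psum (\<lambda>d. psmult (mc ns' d k l) (ug c d)) B')
       = pdiff (psum (\<lambda>a. psum (\<lambda>b. psmult (mc ns c a b) (pmul (ug a k) (ug b l))) B) B)
           (psum (\<lambda>d. psmult (mc ns d k l) (ug c d)) B)"
proof -
  have c': "c \<in> B'" using c by (rule B_in_B')
  have inner: "psum (\<lambda>b. psmult (mc ns' c a b) (pmul (ug a k) (ug b l))) B'
     = psum (\<lambda>b. psmult (mc ns c a b) (pmul (ug a k) (ug b l))) B" if a: "a \<in> B" for a
  proof -
    have "psum (\<lambda>b. psmult (mc ns' c a b) (pmul (ug a k) (ug b l))) B'
       = psum (\<lambda>b. psmult (mc ns' c a (lift 0 b)) (pmul (ug a k) (ug (lift 0 b) l))) B"
      by (rule psum_B'_one_level) (auto simp: mc_ns'[OF c'] level_B[OF c])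
    also have "\<dots> = psum (\<lambda>b. psmult (mc ns c a b) (pmul (ug a k) (ug b l))) B"
      using a c by (intro psum_cong) (simp add: mc_ns'_level_0)
    finally show ?thesis .
  qed
  have "psum (\<lambda>a. psum (\<lambda>b. psmult (mc ns' c a b) (pmul (ug a k) (ug b l))) B') B'
      = psum (\<lambda>a. psum (\<lambda>b. psmult (mc ns' c (lift 0 a) b) (pmul (ug (lift 0 a) k) (ug b l))) B') B"
    by (rule psum_B'_one_level) (auto simp: mc_ns'[OF c'] level_B[OF c])
  also have "\<dots> = psum (\<lambda>a. psum (\<lambda>b. psmult (mc ns c a b) (pmul (ug a k) (ug b l))) B) B"
    by (intro psum_cong) (simp add: inner)
  moreover have "psum (\<lambda>d. psmult (mc ns' d k l) (ug c d)) B'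
      = psum (\<lambda>d. psmult (mc ns' (lift 0 d) k l) (ug c (lift 0 d))) B"
    by (rule psum_B'_one_level) (auto simp: mc_ns' level_B[OF k])
  moreover have "\<dots> = psum (\<lambda>d. psmult (mc ns d k l) (ug c d)) B"
    using k l by (intro psum_cong) (simp add: mc_ns'_level_0)
  ultimately show ?thesis by simp
qed

lemma rel_qset_in_I':
  assumes s: "s \<in> rel_qset ns"
  shows "s \<in> I'"
proof -
  from s consider
      (u1) i j where "i \<in> B" "j \<in> B" "s
          = pdiff (psum (\<lambda>k. pmul (ug i k) (ugs j k)) B) (pconst (delta i j))"
    | (u2) i j where "i \<in> B" "j \<in> B" "s
        = pdiff (psum (\<lambda>k. pmul (ugs k i) (ug k j)) B) (pconst (delta i j))"
    | (m) c k l where "c \<in> B" "k \<in> B" "l \<in> B"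
        "s = pdiff (psum (\<lambda>a. psum (\<lambda>b. psmult (mc ns c a b) (pmul (ug a k) (ug b l))) B) B)
            (psum (\<lambda>d. psmult (mc ns d k l) (ug c d)) B)"
    | (e) i where "i \<in> B" "s = pdiff (psum (\<lambda>j. psmult (eta ns j) (ug i j)) B) (pconst (eta ns i))"
    unfolding rel_qset_def Un_iff mem_Collect_eq by (elim disjE exE conjE) (assumption | rule that; assumption)+
  then show ?thesis
  proof cases
    case u1
    then show ?thesis using unitary_left_in_I' by simp
  next
    case u2
    then show ?thesis using unitary_right_in_I' by simp
  next
    case m
    then show ?thesis using R'_mult[of c k l] by (simp add: R'_mult_level_0[symmetric] R'_in_I' B_in_B')
  next
    case e
    then show ?thesis using unit_in_I' by simp
  qed
qed

text \<open>On level \<open>a\<close>, \<open>U A' = A' U\<close> reads \<open>U A\<^sub>a = A\<^sub>a U\<close> for the copy of \<open>U\<close> there,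
  which agrees with the copy on level 0.\<close>

lemma rel_graph_in_I':
  assumes a: "a \<in> {1..n}" and s: "s \<in> rel_graph ns (As a)"
  shows "s \<in> I'"
proof -
  obtain i j where ij: "i \<in> B" "j \<in> B"
    and s_eq: "s = pdiff (psum (\<lambda>k. psmult (As a k j) (ug i k)) B)
        (psum (\<lambda>k. psmult (As a i k) (ug k j)) B)"
    using s unfolding rel_graph_def by blast
  have an: "a \<le> n" using a by simp
  let ?i = "lift a i" and ?j = "lift a j"
  have i': "?i \<in> B'" and j': "?j \<in> B'" using ij an by (auto intro: lift_in_B')
  have blk: "tower_block a a = As a" using a by (simp add: tower_block_eq)
  have "cong_mod I' (psum (\<lambda>k. psmult (A' k ?j) (ug ?i k)) B')
      (psum (\<lambda>z. psmult (As a z j) (ug ?i (lift a z))) B)"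
    using row_sum_one_level[OF i', of "\<lambda>k. A' k ?j"] ij by (simp add: A'_lift blk cong: psum_cong)
  also have "cong_mod I' \<dots> (psum (\<lambda>z. psmult (As a z j) (ug i z)) B)"
    using ij an by (intro cong_mod_psum cong_mod_psmult ug_lift) auto
  finally have lhs: "cong_mod I' (psum (\<lambda>k. psmult (A' k ?j) (ug ?i k)) B')
      (psum (\<lambda>z. psmult (As a z j) (ug i z)) B)" .
  have "cong_mod I' (psum (\<lambda>k. psmult (A' ?i k) (ug k ?j)) B')
      (psum (\<lambda>z. psmult (As a i z) (ug (lift a z) ?j)) B)"
    using col_sum_one_level[OF j', of "\<lambda>k. A' ?i k"] ij by (simp add: A'_lift blk cong: psum_cong)
  also have "cong_mod I' \<dots> (psum (\<lambda>z. psmult (As a i z) (ug z j)) B)"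
    using ij an by (intro cong_mod_psum cong_mod_psmult ug_lift) auto
  finally have rhs: "cong_mod I' (psum (\<lambda>k. psmult (A' ?i k) (ug k ?j)) B')
      (psum (\<lambda>z. psmult (As a i z) (ug z j)) B)" .
  have "cong_mod I' (psum (\<lambda>k. psmult (A' k ?j) (ug ?i k)) B')
      (psum (\<lambda>k. psmult (A' ?i k) (ug k ?j)) B')"
    using R'_graph[OF i' j'] by (rule cong_mod_R')
  with lhs rhs have "cong_mod I' (psum (\<lambda>z. psmult (As a z j) (ug i z)) B)
      (psum (\<lambda>z. psmult (As a i z) (ug z j)) B)"
    by (meson cong_mod_sym cong_mod_trans)
  then show ?thesis unfolding s_eq cong_mod_def .
qed

lemma R_in_I':
  assumes "s \<in> R"
  shows "s \<in> I'"
proof -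
  from assms consider "s \<in> rel_qset ns" | a where "a \<in> {1..n}" "s \<in> rel_graph ns (As a)"
    unfolding qut_rel_def by blast
  then show ?thesis by cases (auto intro: rel_qset_in_I' rel_graph_in_I')
qed

end

section \<open>The isomorphism\<close>

context tower
begin

text \<open>\<open>collapse\<close> gives the generator images of the isomorphism
  \<open>Pol(Qut(X', A')) \<rightarrow> Pol(\<Inter>\<^sub>a Qut(X, A\<^sub>a))\<close>; the inverse sends \<open>u\<^sub>i\<^sub>j\<close> to the entry
  between the copies of \<open>i\<close> and \<open>j\<close> on level 0.\<close>

definition collapse :: "idx \<times> idx \<Rightarrow> letter ncp" where
  "collapse ij = (if level (fst ij) = level (snd ij) then ug (base (fst ij)) (base (snd ij)) else pzero)"

lemma collapse_apply: "collapse (i, j) = (if level i = level j then ug (base i) (base j) else pzero)"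
  by (simp add: collapse_def)

lemma simg_collapse:
  "simg collapse (i, j, b) = (if level i = level j then mono [(base i, base j, b)] else pzero)"
  using pstar_ug[of "base i" "base j"] by (cases b) (auto simp: simg_def collapse_apply ug_eq_mono ugs_eq_mono)

lemma timg_collapse:
  "timg collapse ((i, j, b), c) = (if level i = level j then mono [((base i, base j, b), c)] else pzero)"
  by (simp add: timg_def simg_collapse cp_letter)

lemma collapse_inverse:
  assumes i: "i \<in> B'" and j: "j \<in> B'"
  shows "pdiff (collapse (i, j)) (ug i j) \<in> I'"
proof (cases "level i = level j")
  case True
  have "cong_mod I' (ug (lift (level i) (base i)) (lift (level i) (base j))) (ug (base i) (base j))"
    using i j by (intro ug_lift) (auto simp: level_le base_in_B)
  then have "cong_mod I' (ug (base i) (base j)) (ug i j)"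
    using True lift_level_base[of i] lift_level_base[of j] by (simp add: cong_mod_sym)
  then show ?thesis using True by (simp add: collapse_apply cong_mod_def)
next
  case False
  have "psmult (-1) (ug i j) \<in> I'" using ug_cross_level[OF i j False] by (rule gideal.smult)
  moreover have "psmult (-1) (ug i j) = pdiff pzero (ug i j)" by (rule ext) (simp add: ncp_app)
  ultimately show ?thesis using False by (simp add: collapse_apply)
qed

lemma collapse_unitary_left:
  assumes i: "i \<in> B'" and j: "j \<in> B'"
  shows "subst (simg collapse) (pdiff (psum (\<lambda>k. pmul (ug i k) (ugs j k)) B') (pconst (delta i j))) \<in> I"
proof -
  have e: "subst (simg collapse) (pdiff (psum (\<lambda>k. pmul (ug i k) (ugs j k)) B') (pconst (delta i j)))
     = pdiff (psum (\<lambda>k. pmul (simg collapse (i, k, False)) (simg collapse (j, k, True))) B')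
         (pconst (delta i j))"
    by (simp add: pmul_ug_ugs subst_pdiff subst_psum subst_letter_pair subst_pconst)
  show ?thesis
  proof (cases "level i = level j")
    case True
    have "psum (\<lambda>k. pmul (simg collapse (i, k, False)) (simg collapse (j, k, True))) B'
        = psum (\<lambda>x. pmul (ug (base i) x) (ugs (base j) x)) B"
      using i j True by (subst psum_B'_one_level[where a = "level i"])
          (auto simp: level_le simg_collapse ug_eq_mono ugs_eq_mono intro!: psum_cong)
    moreover have "pdiff (psum (\<lambda>x. pmul (ug (base i) x) (ugs (base j) x)) B)
        (pconst (delta (base i) (base j))) \<in> R"
      using i j unfolding qut_rel_def rel_qset_def by (intro UnI1) (blast intro: base_in_B)
    ultimately show ?thesis using e True starideal_generator by (simp add: delta_base)
  next
    case False
    have "pmul (simg collapse (i, k, False)) (simg collapse (j, k, True)) = pzero" for k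
      using False by (cases "level i = level k") (auto simp: simg_collapse)
    then have "psum (\<lambda>k. pmul (simg collapse (i, k, False)) (simg collapse (j, k, True))) B' = pzero"
      by (simp add:)
    moreover have "delta i j = 0" using False by (auto simp: delta_def)
    ultimately show ?thesis using e by (simp add: starideal_pzero pconst_0)
  qed
qed

lemma collapse_unitary_right:
  assumes i: "i \<in> B'" and j: "j \<in> B'"
  shows "subst (simg collapse) (pdiff (psum (\<lambda>k. pmul (ugs k i) (ug k j)) B') (pconst (delta i j))) \<in> I"
proof -
  have e: "subst (simg collapse) (pdiff (psum (\<lambda>k. pmul (ugs k i) (ug k j)) B') (pconst (delta i j)))
     = pdiff (psum (\<lambda>k. pmul (simg collapse (k, i, True)) (simg collapse (k, j, False))) B')
         (pconst (delta i j))"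
    by (simp add: pmul_ugs_ug subst_pdiff subst_psum subst_letter_pair subst_pconst)
  show ?thesis
  proof (cases "level i = level j")
    case True
    have "psum (\<lambda>k. pmul (simg collapse (k, i, True)) (simg collapse (k, j, False))) B'
        = psum (\<lambda>x. pmul (ugs x (base i)) (ug x (base j))) B"
      using i j True by (subst psum_B'_one_level[where a = "level i"])
          (auto simp: level_le simg_collapse ug_eq_mono ugs_eq_mono intro!: psum_cong)
    moreover have "pdiff (psum (\<lambda>x. pmul (ugs x (base i)) (ug x (base j))) B)
        (pconst (delta (base i) (base j))) \<in> R"
      using i j unfolding qut_rel_def rel_qset_def by (intro UnI1 UnI2) (blast intro: base_in_B)
    ultimately show ?thesis using e True starideal_generator by (simp add: delta_base)
  next
    case False
    have "pmul (simg collapse (k, i, True)) (simg collapse (k, j, False)) = pzero" for k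
      using False by (cases "level i = level k") (auto simp: simg_collapse)
    then have "psum (\<lambda>k. pmul (simg collapse (k, i, True)) (simg collapse (k, j, False))) B' = pzero"
      by (simp add:)
    moreover have "delta i j = 0" using False by (auto simp: delta_def)
    ultimately show ?thesis using e by (simp add: starideal_pzero pconst_0)
  qed
qed

lemma subst_collapse_mult_rel:
  "subst (simg collapse) (pdiff (psum (\<lambda>a. psum
      (\<lambda>b. psmult (mc ns' c a b) (pmul (ug a k) (ug b l))) B') B')
      (psum (\<lambda>d. psmult (mc ns' d k l) (ug c d)) B'))
   = pdiff (psum (\<lambda>a. psum (\<lambda>b. psmult (mc ns' c a b)
         (pmul (simg collapse (a, k, False)) (simg collapse (b, l, False)))) B') B')
      (psum (\<lambda>d. psmult (mc ns' d k l) (simg collapse (c, d, False))) B')"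
  by (simp only: pmul_ug_ug)
     (simp add: ug_eq_mono subst_pdiff subst_psum subst_psmult subst_letter_pair subst_letter)

lemma collapse_mult_same_level:
  assumes c: "c \<in> B'" and kl: "level k = level c" "level l = level c"
  shows "psum (\<lambda>a. psum (\<lambda>b. psmult (mc ns' c a b)
           (pmul (simg collapse (a, k, False)) (simg collapse (b, l, False)))) B') B'
      = psum (\<lambda>x. psum (\<lambda>y. psmult (mc ns (base c) x y) (pmul (ug x (base k)) (ug y (base l)))) B) B"
    and "psum (\<lambda>d. psmult (mc ns' d k l) (simg collapse (c, d, False))) B'
      = psum (\<lambda>x. psmult (mc ns x (base k) (base l)) (ug (base c) x)) B"
proof -
  let ?a = "level c"
  have a: "?a \<le> n" using c by (rule level_le)
  have inner: "psum (\<lambda>b. psmult (mc ns' c (lift ?a x) b)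
        (pmul (simg collapse (lift ?a x, k, False)) (simg collapse (b, l, False)))) B'
      = psum (\<lambda>y. psmult (mc ns (base c) x y) (pmul (ug x (base k)) (ug y (base l)))) B" if x: "x \<in> B" for x
    using x kl a c by (subst psum_B'_one_level[where a = ?a])
        (auto simp: mc_ns' simg_collapse ug_eq_mono intro!: psum_cong)
  have "psum (\<lambda>a. psum (\<lambda>b. psmult (mc ns' c a b)
        (pmul (simg collapse (a, k, False)) (simg collapse (b, l, False)))) B') B'
      = psum (\<lambda>x. psum (\<lambda>b. psmult (mc ns' c (lift ?a x) b)
        (pmul (simg collapse (lift ?a x, k, False)) (simg collapse (b, l, False)))) B') B"
    using a c by (subst psum_B'_one_level[where a = ?a]) (auto simp: mc_ns')
  also have "\<dots> = psum (\<lambda>x. psum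
      (\<lambda>y. psmult (mc ns (base c) x y) (pmul (ug x (base k)) (ug y (base l)))) B) B"
    by (intro psum_cong inner)
  finally show "psum (\<lambda>a. psum (\<lambda>b. psmult (mc ns' c a b)
           (pmul (simg collapse (a, k, False)) (simg collapse (b, l, False)))) B') B'
      = psum (\<lambda>x. psum (\<lambda>y. psmult (mc ns (base c) x y) (pmul (ug x (base k)) (ug y (base l)))) B) B" .
  show "psum (\<lambda>d. psmult (mc ns' d k l) (simg collapse (c, d, False))) B'
      = psum (\<lambda>x. psmult (mc ns x (base k) (base l)) (ug (base c) x)) B"
    using a c kl by (subst psum_B'_one_level[where a = ?a])
      (auto simp: mc_ns' simg_collapse ug_eq_mono lift_in_B' intro!: psum_cong)
qed

lemma collapse_mult_cross_level:
  assumes c: "c \<in> B'" and kl: "\<not> (level k = level c \<and> level l = level c)"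
  shows "psum (\<lambda>a. psum (\<lambda>b. psmult (mc ns' c a b)
           (pmul (simg collapse (a, k, False)) (simg collapse (b, l, False)))) B') B' = pzero"
    and "psum (\<lambda>d. psmult (mc ns' d k l) (simg collapse (c, d, False))) B' = pzero"
proof -
  have "psmult (mc ns' c a b) (pmul (simg collapse (a, k, False)) (simg collapse (b, l, False))) = pzero" for a b
    using c kl by (cases "level a = level c \<and> level b = level c") (auto simp: mc_ns' simg_collapse)
  then show "psum (\<lambda>a. psum (\<lambda>b. psmult (mc ns' c a b)
           (pmul (simg collapse (a, k, False)) (simg collapse (b, l, False)))) B') B' = pzero"
    by simp
  have "psmult (mc ns' d k l) (simg collapse (c, d, False)) = pzero" if d: "d \<in> B'" for d
    using d kl by (cases "level k = level d \<and> level l = level d") (auto simp: mc_ns' simg_collapse)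
  then show "psum (\<lambda>d. psmult (mc ns' d k l) (simg collapse (c, d, False))) B' = pzero"
    by (simp cong: psum_cong)
qed

lemma collapse_mult:
  assumes c: "c \<in> B'" and k: "k \<in> B'" and l: "l \<in> B'"
  shows "subst (simg collapse) (pdiff (psum
      (\<lambda>a. psum (\<lambda>b. psmult (mc ns' c a b) (pmul (ug a k) (ug b l))) B') B')
         (psum (\<lambda>d. psmult (mc ns' d k l) (ug c d)) B')) \<in> I"
proof (cases "level k = level c \<and> level l = level c")
  case True
  have "pdiff (psum (\<lambda>x. psum (\<lambda>y. psmult (mc ns (base c) x y)
      (pmul (ug x (base k)) (ug y (base l)))) B) B)
     (psum (\<lambda>x. psmult (mc ns x (base k) (base l)) (ug (base c) x)) B) \<in> R"
    using c k l unfolding qut_rel_def rel_qset_def by (intro UnI1 UnI2) (blast intro: base_in_B)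
  then show ?thesis
    using True c by (simp add: subst_collapse_mult_rel collapse_mult_same_level starideal_generator)
next
  case False
  then show ?thesis
    using c by (simp add: subst_collapse_mult_rel collapse_mult_cross_level starideal_pzero)
qed

lemma collapse_unit:
  assumes i: "i \<in> B'"
  shows "subst (simg collapse) (pdiff (psum (\<lambda>j. psmult (eta ns' j) (ug i j)) B') (pconst (eta ns' i))) \<in> I"
proof -
  have e: "subst (simg collapse) (pdiff (psum (\<lambda>j. psmult (eta ns' j) (ug i j)) B') (pconst (eta ns' i)))
     = pdiff (psum (\<lambda>j. psmult (eta ns' j) (simg collapse (i, j, False))) B') (pconst (eta ns' i))"
    by (simp add: ug_eq_mono subst_pdiff subst_psum subst_psmult subst_letter subst_pconst)
  have cA: "level i \<le> n" using i by (rule level_le)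
  have f: "psum (\<lambda>j. psmult (eta ns' j) (simg collapse (i, j, False))) B'
      = psum (\<lambda>x. psmult (eta ns x) (ug (base i) x)) B"
    using cA i by (subst psum_B'_one_level[where a = "level i"])
        (auto simp: simg_collapse ug_eq_mono eta_ns'_lift intro!: psum_cong)
  have "pdiff (psum (\<lambda>x. psmult (eta ns x) (ug (base i) x)) B) (pconst (eta ns (base i))) \<in> R"
    using i unfolding qut_rel_def rel_qset_def by (intro UnI1 UnI2) (blast intro: base_in_B)
  then show ?thesis using e f starideal_generator i by (simp add: eta_ns')
qed

lemma collapse_graph:
  assumes i: "i \<in> B'" and j: "j \<in> B'"
  shows "subst (simg collapse) (pdiff (psum (\<lambda>k. psmult (A' k j) (ug i k)) B')
      (psum (\<lambda>k. psmult (A' i k) (ug k j)) B')) \<in> I"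
proof -
  let ?a = "level i" and ?b = "level j"
  have e: "subst (simg collapse) (pdiff (psum (\<lambda>k. psmult (A' k j) (ug i k)) B')
      (psum (\<lambda>k. psmult (A' i k) (ug k j)) B'))
     = pdiff (psum (\<lambda>k. psmult (A' k j) (simg collapse (i, k, False))) B')
         (psum (\<lambda>k. psmult (A' i k) (simg collapse (k, j, False))) B')"
    by (simp add: ug_eq_mono subst_pdiff subst_psum subst_psmult subst_letter)
  have an: "?a \<le> n" and bn: "?b \<le> n" using i j by (auto simp: level_le)
  have f1: "psum (\<lambda>k. psmult (A' k j) (simg collapse (i, k, False))) B'
      = psum (\<lambda>x. psmult (tower_block ?a ?b x (base j)) (ug (base i) x)) B"
    using an i by (subst psum_B'_one_level[where a = ?a]) (auto simp: simg_collapse ug_eq_mono A'_def intro!: psum_cong)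
  have f2: "psum (\<lambda>k. psmult (A' i k) (simg collapse (k, j, False))) B'
      = psum (\<lambda>x. psmult (tower_block ?a ?b (base i) x) (ug x (base j))) B"
    using bn j by (subst psum_B'_one_level[where a = ?b]) (auto simp: simg_collapse ug_eq_mono A'_def intro!: psum_cong)
  have ri: "base i \<in> B" and rj: "base j \<in> B" using i j by (auto simp: base_in_B)
  show ?thesis
  proof (cases "?a = ?b \<and> 1 \<le> ?a")
    case True
    then have blk: "tower_block ?a ?b = As ?a" by (auto simp: tower_block_eq)
    have "?a \<in> {1..n}" using True an by auto
    then have "pdiff (psum (\<lambda>x. psmult (As ?a x (base j)) (ug (base i) x)) B)
        (psum (\<lambda>x. psmult (As ?a (base i) x) (ug x (base j))) B) \<in> R"
      using ri rj unfolding qut_rel_def rel_graph_def by (intro UnI2) blast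
    then show ?thesis using e f1 f2 blk starideal_generator by simp
  next
    case F: False
    show ?thesis
    proof (cases "?a = Suc ?b")
      case True
      then have blk: "tower_block ?a ?b = idm" using F by (simp add: tower_block_eq)
      show ?thesis using e f1 f2 ri rj by
          (simp add: blk psum_idm_left[OF finite_qbasis] psum_idm_right[OF finite_qbasis] starideal_pzero)
    next
      case False
      then have blk: "tower_block ?a ?b = (\<lambda>x y. 0)" using F by (auto simp: tower_block_eq)
      show ?thesis using e f1 f2 by (simp add: blk starideal_pzero)
    qed
  qed
qed

lemma collapse_R':
  assumes r: "r \<in> R'"
  shows "subst (simg collapse) r \<in> I"
proof -
  from r have "r \<in> rel_qset ns' \<or> r \<in> rel_graph ns' A'" by (simp add: qut_rel_def)
  then show ?thesis
  proof
    assume "r \<in> rel_qset ns'"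
    then consider
        (u1) i j where "i \<in> B'" "j \<in> B'" "r
            = pdiff (psum (\<lambda>k. pmul (ug i k) (ugs j k)) B') (pconst (delta i j))"
      | (u2) i j where "i \<in> B'" "j \<in> B'" "r
          = pdiff (psum (\<lambda>k. pmul (ugs k i) (ug k j)) B') (pconst (delta i j))"
      | (m) c k l where "c \<in> B'" "k \<in> B'" "l \<in> B'" "r
          = pdiff (psum (\<lambda>a. psum (\<lambda>b. psmult (mc ns' c a b) (pmul (ug a k) (ug b l))) B') B')
            (psum (\<lambda>d. psmult (mc ns' d k l) (ug c d)) B')"
      | (e) i where "i \<in> B'" "r = pdiff (psum (\<lambda>j. psmult (eta ns' j) (ug i j)) B') (pconst (eta ns' i))"
      unfolding rel_qset_def Un_iff mem_Collect_eq by (elim disjE exE conjE) (assumption | rule that; assumption)+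
    then show ?thesis
    proof cases
      case u1 then show ?thesis using collapse_unitary_left[of i j] by simp
    next
      case u2 then show ?thesis using collapse_unitary_right[of i j] by simp
    next
      case m then show ?thesis using collapse_mult[of c k l] by simp
    next
      case e then show ?thesis using collapse_unit[of i] by simp
    qed
  next
    assume "r \<in> rel_graph ns' A'"
    then show ?thesis unfolding rel_graph_def mem_Collect_eq
      using collapse_graph by blast
  qed
qed

lemma comult_eq_psum_mono: "comult S i j = psum (\<lambda>k. mono [((i, k, False), False), ((k, j, False), True)]) S"
  by (simp add: comult_def ug_eq_mono cp_letter pmul_mono_mono)

lemma collapse_comult:
  assumes i: "i \<in> B'" and j: "j \<in> B'"
  shows "subst (timg collapse) (comult B' i j) = subst (dimg B) (collapse (i, j))"
proof -
  have l: "subst (timg collapse) (comult B' i j) =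
      psum (\<lambda>k. pmul (timg collapse ((i, k, False), False)) (timg collapse ((k, j, False), True))) B'"
    by (simp add: comult_eq_psum_mono subst_psum subst_letter_pair)
  show ?thesis
  proof (cases "level i = level j")
    case True
    have "psum (\<lambda>k. pmul (timg collapse ((i, k, False), False)) (timg collapse ((k, j, False), True))) B'
        = psum (\<lambda>x. mono [((base i, x, False), False), ((x, base j, False), True)]) B"
      using i j True by (subst psum_B'_one_level[where a = "level i"])
        (auto simp: level_le timg_collapse pmul_mono_mono intro!: psum_cong)
    moreover have "subst (dimg B) (collapse (i, j))
        = psum (\<lambda>x. mono [((base i, x, False), False), ((x, base j, False), True)]) B"
      using True by (simp add: collapse_apply ug_eq_mono subst_letter dimg_def comult_eq_psum_mono)
    ultimately show ?thesis using l by simp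
  next
    case False
    have "pmul (timg collapse ((i, k, False), False)) (timg collapse ((k, j, False), True)) = pzero" for k
      using False by (cases "level i = level k") (auto simp: timg_collapse)
    then show ?thesis using l False by (simp add: collapse_apply)
  qed
qed

lemma tower_qgiso: "qgiso B' R' B R"
proof -
  let ?inv = "\<lambda>(i, j). ug i j"
  have "\<forall>i\<in>B'. \<forall>j\<in>B'. collapse (i, j) \<in> ncpoly (lett B)"
    by (simp add: collapse_apply ug_ncpoly base_in_B ncpoly_pzero)
  moreover have "\<forall>i\<in>B. \<forall>j\<in>B. ?inv (i, j) \<in> ncpoly (lett B')"
    by (simp add: ug_ncpoly B_in_B')
  moreover have "\<forall>r\<in>R'. subst (simg collapse) r \<in> I"
    using collapse_R' by blast
  moreover have "\<forall>s\<in>R. subst (simg ?inv) s \<in> starideal flipL (lett B') R'"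
    using R_in_I' by (simp add: simg_ug_id subst_id finite_supp_qut_rel starideal_R')
  moreover have "\<forall>i\<in>B'. \<forall>j\<in>B'. pdiff (subst (simg ?inv) (collapse (i, j))) (ug i j)
      \<in> starideal flipL (lett B') R'"
  proof -
    have "subst (simg ?inv) (collapse (i, j)) = collapse (i, j)" for i j
      by (simp add: simg_ug_id subst_id collapse_apply finite_supp_ug)
    then show ?thesis using collapse_inverse by (simp add: starideal_R')
  qed
  moreover have "\<forall>i\<in>B. \<forall>j\<in>B. pdiff (subst (simg collapse) (?inv (i, j))) (ug i j) \<in> I"
    by (simp add: ug_eq_mono subst_letter simg_collapse level_B base_B starideal_pzero)
  moreover have "\<forall>i\<in>B'. \<forall>j\<in>B'.
      pdiff (subst (timg collapse) (comult B' i j)) (subst (dimg B) (collapse (i, j))) \<in> tideal B R"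
    by (simp add: collapse_comult tideal_def starideal_pzero)
  ultimately show ?thesis
    unfolding qgiso_def by blast
qed

end

theorem theorem5p2:
  fixes ns :: "nat list" and n :: nat and As :: "nat \<Rightarrow> lmap"
  assumes "qset ns"
    and "\<forall>i\<in>{1..n}. qgraph ns (As i) \<and> noloops ns (As i) \<and> regular ns (As i)"
  shows "\<exists>ns' A'. qset ns' \<and> qgraph ns' A' \<and>
           qgiso (qbasis ns') (qut_rel ns' {A'}) (qbasis ns) (qut_rel ns (As ` {1..n}))"
proof -
  \<comment> \<open>No loops are needed: the levels are told apart by the degrees of \<open>A'\<close>.\<close>
  obtain dg where "\<forall>a\<in>{1..n}. dregular ns (As a) (dg a)"
    using assms(2) unfolding regular_def by metis
  then interpret tower ns n As dg
    using assms by unfold_locales auto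
  show ?thesis using qset_ns' qgraph_A' tower_qgiso by blast
qed

end
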